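(* Let $\theta^*\in\mathbb{R}$ and $c>0$. Consider the Dirichlet process mixture model with uniform kernel $k(x\mid\theta)=(2c)^{-1}\mathbb{1}_{(\theta-c,\theta+c)}(x)$, base density $q_0$ equal to the uniform density on $(\theta^*-c,\theta^*+c)$, and prior $\pi$ on the concentration parameter satisfying A1, A2 and A3 with some $\rho\ge38$. Let $X_1,X_2,\dots$ be i.i.d. $\mathrm{Unif}(\theta^*-c,\theta^*+c)$, with joint law $P^{(\infty)}$. Then $\mathrm{pr}(K_n=1\mid X_{1:n})\to1$ in $P^{(\infty)}$-probability as $n\to\infty$.
   Context: Model: $\alpha\sim\pi$, $\tilde P\mid\alpha\sim\mathrm{DP}(\alpha,Q_0)$ with $Q_0$ having density $q_0$, $\theta_i\mid\tilde P$ i.i.d. $\tilde P$, $X_i\mid\theta_i\sim k(\cdot\mid\theta_i)$ independently. $K_n$ is the number of distinct values among $\theta_1,\dots,\theta_n$. With $\tau_s(n)$ the set of partitions of $\{1,\dots,n\}$ into $s$ nonempty blocks $A_1,\dots,A_s$, $a_j=|A_j|$, $\alpha^{(n)}=\alpha(\alpha+1)\cdots(\alpha+n-1)$, and $m(x_B)=\int\prod_{i\in B}k(x_i\mid\theta)q_0(\theta)d\theta$, the posterior is $\mathrm{pr}(K_n=s\mid X_{1:n})=W_s/\sum_{r=1}^nW_r$ with $W_s=\int_0^\infty\frac{\alpha^s}{\alpha^{(n)}}\pi(d\alpha)\sum_{A\in\tau_s(n)}\prod_j(a_j-1)!\,m(X_{A_j})$. (A1) $\pi$ has a Lebesgue density,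 also denoted $\pi$; (A2) there exist $\epsilon,\delta,\beta$ with $\frac1\delta\alpha^\beta\le\pi(\alpha)\le\delta\alpha^\beta$ for all $\alpha\in(0,\epsilon)$; (A3) there exist $D,\nu,\rho>0$ with $\int\alpha^s\pi(\alpha)d\alpha<D\rho^{-s}\Gamma(\nu+s+1)$ for every integer $s\ge1$. *)

theory Defs
  imports "HOL-Probability.Probability"
begin

text \<open>Set partitions of the index set {0..<n} (representing {1,...,n}) into exactly s nonempty blocks.\<close>
definition set_partitions_k :: "nat \<Rightarrow> nat \<Rightarrow> nat set set set" where
  "set_partitions_k n s = {A. partition_on {..<n} A \<and> card A = s}"

definition dpm_m :: "(real \<Rightarrow> real \<Rightarrow> real) \<Rightarrow> (real \<Rightarrow> real) \<Rightarrow> (nat \<Rightarrow> real) \<Rightarrow> nat set \<Rightarrow> real" where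
  "dpm_m k q0 x B = (LINT \<theta>|lborel. (\<Prod>i\<in>B. k (x i) \<theta>) * q0 \<theta>)"

definition dpm_W :: "(real \<Rightarrow> real) \<Rightarrow> (real \<Rightarrow> real \<Rightarrow> real) \<Rightarrow> (real \<Rightarrow> real) \<Rightarrow> nat \<Rightarrow> (nat \<Rightarrow> real) \<Rightarrow> nat \<Rightarrow> real" where
  "dpm_W prior k q0 n x s =
     (LINT \<alpha>:{0<..}|lborel. \<alpha> ^ s / pochhammer \<alpha> n * prior \<alpha>) *
     (\<Sum>A\<in>set_partitions_k n s. \<Prod>B\<in>A. fact (card B - 1) * dpm_m k q0 x B)"

text \<open>Posterior pr(K_n = s | X_{1:n}) = W_s / sum_{r=1}^n W_r.\<close>
definition dpm_post :: "(real \<Rightarrow> real) \<Rightarrow> (real \<Rightarrow> real \<Rightarrow> real) \<Rightarrow> (real \<Rightarrow> real) \<Rightarrow> nat \<Rightarrow> (nat \<Rightarrow> real) \<Rightarrow> nat \<Rightarrow> real" where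
  "dpm_post prior k q0 n x s = dpm_W prior k q0 n x s / (\<Sum>r=1..n. dpm_W prior k q0 n x r)"

definition unif_kernel :: "real \<Rightarrow> real \<Rightarrow> real \<Rightarrow> real" where
  "unif_kernel c x \<theta> = indicator {\<theta> - c<..<\<theta> + c} x / (2 * c)"

definition unif_dens :: "real \<Rightarrow> real \<Rightarrow> real \<Rightarrow> real" where
  "unif_dens a c t = indicator {a - c<..<a + c} t / (2 * c)"

end

theory Submission
  imports Defs
begin

(* With the uniform kernel, (2c)^(|B|+1) m(X_B) is the length of the set of parameters in
   (theta* - c, theta* + c) within distance c of every X_i, i in B, and pr(K_n = 1 | X) = W_1 / (W_1 + Y)
   with Y = W_2 + ... + W_n.  With probability at least 1 - 1/K all observations lie below
   theta* + c - 2c/(nK), and then W_1 >= L for an explicit L.  Independence and a tent-function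
   integral give E m(X_B) <= 2 (2c)^-|B| / (|B| + 1), and a recursion over set partitions bounds the
   expected partition sum with r blocks by n! 2 16^(r-1) / (r! n^2) (2c)^-n.  Markov's inequality then
   bounds pr(Y >= eps L) by 2K/eps times a sum of prior ratios I_r / I_1 16^(r-1) / r!, where
   I_r = int alpha^r / alpha^(n) pi(d alpha).  Splitting that integral at a small a gives
   I_r / I_1 <= a^(r-1) + O((b+1)^(n-1) / (a+1)^(n-1)) for any b < a: A2 bounds I_1 from below,
   A3 controls the moments, and the ratio of rising factorials tends to 0. *)

section \<open>Weighted sums over set partitions\<close>

definition partitions_into :: "'a set \<Rightarrow> nat \<Rightarrow> 'a set set set" where
  "partitions_into S s = {A. partition_on S A \<and> card A = s}"

definition partition_sum :: "(nat \<Rightarrow> real) \<Rightarrow> nat \<Rightarrow> 'a set \<Rightarrow> real" where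
  "partition_sum w s S = (\<Sum>A\<in>partitions_into S s. \<Prod>B\<in>A. w (card B))"

lemma finite_partitions_into: "finite S \<Longrightarrow> finite (partitions_into S s)"
  by (rule finite_subset[of _ "Pow (Pow S)"]) (auto simp: partitions_into_def partition_on_def)

lemma partitions_into_empty: "s \<ge> 1 \<Longrightarrow> partitions_into {} s = {}"
  by (auto simp: partitions_into_def partition_on_empty)

lemma partitions_into_one: "S \<noteq> {} \<Longrightarrow> partitions_into S 1 = {{S}}"
proof (intro equalityI subsetI)
  fix A assume "A \<in> partitions_into S 1"
  then have "partition_on S A" "card A = 1" by (auto simp: partitions_into_def)
  then obtain B where "A = {B}" by (auto simp: card_Suc_eq)
  with \<open>partition_on S A\<close> show "A \<in> {{S}}" by (auto simp: partition_on_def)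
qed (auto simp: partitions_into_def partition_on_space)

lemma partition_sum_one: "S \<noteq> {} \<Longrightarrow> partition_sum w 1 S = w (card S)"
  unfolding partition_sum_def by (subst partitions_into_one) auto

lemma partition_on_Diff_block:
  assumes "partition_on S A" "B \<in> A"
  shows "partition_on (S - B) (A - {B})"
proof -
  have "A = insert B (A - {B})" using assms by auto
  moreover have "disjnt B (\<Union>(A - {B}))"
    using assms by (auto simp: partition_on_def disjoint_def disjnt_def)
  ultimately show ?thesis using assms partition_on_insert[of B "A - {B}" S] by metis
qed

lemma partition_on_insert_block:
  assumes "partition_on (S - B) A" "B \<subseteq> S" "B \<noteq> {}"
  shows "partition_on S (insert B A)" "B \<notin> A"
proof -
  have "disjnt B (\<Union>A)" using assms by (auto simp: partition_on_def disjnt_def)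
  then show "partition_on S (insert B A)" "B \<notin> A"
    using assms partition_on_insert[of B A S] by (auto simp: disjnt_def)
qed

lemma sum_card_partition_on:
  assumes "finite S" "partition_on S A"
  shows "(\<Sum>B\<in>A. card B) = card S"
proof -
  have "card (\<Union>A) = (\<Sum>B\<in>A. card B)"
    by (rule card_Union_disjoint)
      (use assms in \<open>auto simp: partition_on_def disjoint_def pairwise_def disjnt_def intro: finite_subset\<close>)
  then show ?thesis using assms by (simp add: partition_on_def)
qed

lemma bij_betw_remove_block:
  assumes S: "finite S" and s: "s \<ge> 1"
  shows "bij_betw (\<lambda>(A, B). (B, A - {B})) (SIGMA A:partitions_into S s. A)
           (SIGMA B:Pow S - {{}}. partitions_into (S - B) (s - 1))"
proof (rule bij_betw_byWitness[where f' = "\<lambda>(B, A'). (insert B A', B)"])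
  have remove: "B \<in> Pow S - {{}} \<and> A - {B} \<in> partitions_into (S - B) (s - 1)"
    if "A \<in> partitions_into S s" "B \<in> A" for A B
  proof -
    have "finite A" using that S finite_elements by (auto simp: partitions_into_def)
    with that partition_on_Diff_block[of S A B] show ?thesis
      by (auto simp: partitions_into_def partition_on_def)
  qed
  have insert: "insert B A' \<in> partitions_into S s \<and> B \<notin> A'"
    if "B \<in> Pow S - {{}}" "A' \<in> partitions_into (S - B) (s - 1)" for B A'
  proof -
    have "finite A'" using that S finite_elements[of "S - B"] by (auto simp: partitions_into_def)
    with that s partition_on_insert_block[of S B A'] show ?thesis
      by (auto simp: partitions_into_def)
  qed
  show "\<forall>a\<in>SIGMA A:partitions_into S s. A. (\<lambda>(B, A'). (insert B A', B)) ((\<lambda>(A, B). (B, A - {B})) a) = a"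
    by auto
  show "\<forall>b\<in>SIGMA B:Pow S - {{}}. partitions_into (S - B) (s - 1).
          (\<lambda>(A, B). (B, A - {B})) ((\<lambda>(B, A'). (insert B A', B)) b) = b"
    using insert by auto
  show "(\<lambda>(A, B). (B, A - {B})) ` (SIGMA A:partitions_into S s. A)
          \<subseteq> (SIGMA B:Pow S - {{}}. partitions_into (S - B) (s - 1))"
    using remove by auto
  show "(\<lambda>(B, A'). (insert B A', B)) ` (SIGMA B:Pow S - {{}}. partitions_into (S - B) (s - 1))
          \<subseteq> (SIGMA A:partitions_into S s. A)"
    using insert by auto
qed

text \<open>Marking one block of a partition into \<open>s\<close> blocks, counted in two ways.\<close>
lemma partition_sum_rec:
  assumes S: "finite S" and s: "s \<ge> 1"
  shows "real s * partition_sum w s S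
       = (\<Sum>B\<in>Pow S - {{}}. w (card B) * partition_sum w (s - 1) (S - B))"
proof -
  have fin: "\<And>A. A \<in> partitions_into S s \<Longrightarrow> finite A"
    using S finite_elements by (auto simp: partitions_into_def)
  have "real s * partition_sum w s S
      = (\<Sum>A\<in>partitions_into S s. \<Sum>B\<in>A. w (card B) * (\<Prod>B'\<in>A - {B}. w (card B')))"
    unfolding partition_sum_def sum_distrib_left
  proof (intro sum.cong refl)
    fix A assume A: "A \<in> partitions_into S s"
    have "(\<Sum>B\<in>A. w (card B) * (\<Prod>B'\<in>A - {B}. w (card B'))) = (\<Sum>B\<in>A. \<Prod>B'\<in>A. w (card B'))"
      by (intro sum.cong refl) (simp add: prod.remove[OF fin[OF A]])
    then show "real s * (\<Prod>B\<in>A. w (card B)) = (\<Sum>B\<in>A. w (card B) * (\<Prod>B'\<in>A - {B}. w (card B')))"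
      using A by (simp add: partitions_into_def)
  qed
  also have "\<dots> = (\<Sum>(A, B)\<in>(SIGMA A:partitions_into S s. A). w (card B) * (\<Prod>B'\<in>A - {B}. w (card B')))"
    by (rule sum.Sigma) (use S finite_partitions_into fin in auto)
  also have "\<dots> = (\<Sum>(B, A')\<in>(SIGMA B:Pow S - {{}}. partitions_into (S - B) (s - 1)).
                     w (card B) * (\<Prod>B'\<in>A'. w (card B')))"
    using sum.reindex_bij_betw[OF bij_betw_remove_block[OF S s],
            of "\<lambda>(B, A'). w (card B) * (\<Prod>B'\<in>A'. w (card B'))"]
    by (simp add: split_def)
  also have "\<dots> = (\<Sum>B\<in>Pow S - {{}}. \<Sum>A'\<in>partitions_into (S - B) (s - 1).
                     w (card B) * (\<Prod>B'\<in>A'. w (card B')))"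
    by (rule sum.Sigma[symmetric]) (use S in \<open>auto intro: finite_partitions_into\<close>)
  also have "\<dots> = (\<Sum>B\<in>Pow S - {{}}. w (card B) * partition_sum w (s - 1) (S - B))"
    by (simp add: partition_sum_def sum_distrib_left)
  finally show ?thesis .
qed

lemma sum_Pow_card:
  assumes "finite S"
  shows "(\<Sum>B\<in>Pow S. g (card B)) = (\<Sum>k\<le>card S. real (card S choose k) * g k)"
proof -
  have "(\<Sum>B\<in>Pow S. g (card B)) = (\<Sum>k\<le>card S. \<Sum>B\<in>{B\<in>Pow S. card B = k}. g (card B))"
    by (rule sum.group[symmetric]) (use assms in \<open>auto intro: card_mono\<close>)
  also have "\<dots> = (\<Sum>k\<le>card S. real (card S choose k) * g k)"
  proof (rule sum.cong[OF refl])
    fix k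
    have "{B\<in>Pow S. card B = k} = {B. B \<subseteq> S \<and> card B = k}" by auto
    then show "(\<Sum>B\<in>{B\<in>Pow S. card B = k}. g (card B)) = real (card S choose k) * g k"
      using n_subsets[OF assms] by simp
  qed
  finally show ?thesis .
qed

lemma sum_inverse_squares_le: "(\<Sum>k=1..N. 1 / (real k)^2) \<le> 2"
proof -
  have "(\<Sum>k=1..N. 1 / (real k)^2) \<le> 2 - 1 / real (max N 1)"
  proof (induction N)
    case (Suc N)
    show ?case
    proof (cases "N = 0")
      case False
      have "1 / (real (Suc N))^2 \<le> 1 / (real N * real (Suc N))"
        using False by (intro divide_left_mono) (auto simp: power2_eq_square)
      also have "\<dots> = 1 / real N - 1 / real (Suc N)"
        using False by (simp add: field_simps)
      finally show ?thesis using Suc False by simp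
    qed simp
  qed simp
  also have "\<dots> \<le> 2" by simp
  finally show ?thesis .
qed

lemma inverse_square_convolution_le:
  "(\<Sum>k=1..m-1. 1 / ((real k)^2 * (real (m - k))^2)) \<le> 8 / (real m)^2"
proof -
  have "1 / ((real k)^2 * (real (m - k))^2) \<le> (2 / (real k)^2 + 2 / (real (m - k))^2) / (real m)^2"
    if "k \<in> {1..m-1}" for k
  proof -
    define a b where "a = real k" and "b = real (m - k)"
    have ab: "a > 0" "b > 0" "a + b = real m" using that by (auto simp: a_def b_def)
    have "(a + b)^2 \<le> 2 * a^2 + 2 * b^2" by (smt (verit) sum_squares_bound power2_sum)
    then have "(a + b)^2 / (a^2 * b^2) \<le> 2 / a^2 + 2 / b^2"
      using ab by (simp add: field_simps)
    then show ?thesis using ab by (simp add: a_def b_def field_simps)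
  qed
  then have "(\<Sum>k=1..m-1. 1 / ((real k)^2 * (real (m - k))^2))
      \<le> (\<Sum>k=1..m-1. (2 / (real k)^2 + 2 / (real (m - k))^2) / (real m)^2)"
    by (rule sum_mono)
  also have "\<dots> = (2 * (\<Sum>k=1..m-1. 1 / (real k)^2) + 2 * (\<Sum>k=1..m-1. 1 / (real (m - k))^2))
                   / (real m)^2"
    by (simp add: sum_divide_distrib[symmetric] sum.distrib sum_distrib_left)
  also have "(\<Sum>k=1..m-1. 1 / (real (m - k))^2) = (\<Sum>k=1..m-1. 1 / (real k)^2)"
    by (rule sum.reindex_bij_witness[where i = "\<lambda>k. m - k" and j = "\<lambda>k. m - k"]) auto
  also have "(2 * (\<Sum>k=1..m-1. 1 / (real k)^2) + 2 * (\<Sum>k=1..m-1. 1 / (real k)^2)) / (real m)^2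
             \<le> 8 / (real m)^2"
    using sum_inverse_squares_le[of "m - 1"] by (intro divide_right_mono) auto
  finally show ?thesis .
qed

text \<open>\<open>block_weight a\<close> bounds the expected contribution \<open>(a - 1)! m(X\<^sub>B)\<close> of a block of size \<open>a\<close>,
  in units of \<open>(2c)\<^sup>-\<^sup>a\<close>.\<close>
definition block_weight :: "nat \<Rightarrow> real" where
  "block_weight a = fact (a - 1) * (2 / (real a + 1))"

definition partition_bound :: "nat \<Rightarrow> nat \<Rightarrow> real" where
  "partition_bound s m = fact m * 2 * 16^(s - 1) / (fact s * (real m)^2)"

lemma block_weight_nonneg: "block_weight a \<ge> 0"
  by (simp add: block_weight_def)

lemma partition_bound_nonneg: "partition_bound s m \<ge> 0"
  by (simp add: partition_bound_def)

lemma block_weight_le_partition_bound: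
  assumes m: "m \<ge> 1"
  shows "block_weight m \<le> partition_bound 1 m"
proof -
  have "block_weight m = fact (m - 1) * 2 / (real m + 1)"
    by (simp add: block_weight_def)
  also have "\<dots> \<le> fact (m - 1) * 2 / real m"
    using m by (intro divide_left_mono) auto
  also have "\<dots> = partition_bound 1 m"
  proof -
    have "(fact m :: real) = real m * fact (m - 1)" by (rule fact_reduce) (use m in auto)
    then show ?thesis using m by (simp add: partition_bound_def power2_eq_square)
  qed
  finally show ?thesis .
qed

lemma binomial_convolution_le:
  assumes s: "s \<ge> 1"
  shows "(\<Sum>k=1..m-1. real (m choose k) * (block_weight k * partition_bound s (m - k)))
         \<le> real (s + 1) * partition_bound (s + 1) m"
proof (cases "m = 0")
  case False
  define C where "C = (fact m * 4 * 16^(s - 1) / fact s :: real)"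
  have "real (m choose k) * (block_weight k * partition_bound s (m - k))
          = C * (1 / (real k * (real k + 1) * (real (m - k))^2))"
    if "k \<in> {1..m-1}" for k
  proof -
    from that have k: "1 \<le> k" "k < m" by auto
    have "(fact k :: real) = real k * fact (k - 1)" by (rule fact_reduce) (use k in auto)
    with k show ?thesis
      by (simp add: binomial_fact C_def block_weight_def partition_bound_def field_simps)
  qed
  then have "(\<Sum>k=1..m-1. real (m choose k) * (block_weight k * partition_bound s (m - k)))
      = (\<Sum>k=1..m-1. C * (1 / (real k * (real k + 1) * (real (m - k))^2)))"
    by (rule sum.cong[OF refl])
  also have "\<dots> \<le> (\<Sum>k=1..m-1. C * (1 / ((real k)^2 * (real (m - k))^2)))"
  proof (intro sum_mono mult_left_mono)
    fix k assume k: "k \<in> {1..m-1}"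
    have "(real k)^2 \<le> real k * (real k + 1)" by (simp add: power2_eq_square distrib_left)
    then have "(real k)^2 * (real (m - k))^2 \<le> real k * (real k + 1) * (real (m - k))^2"
      by (intro mult_right_mono) auto
    then show "1 / (real k * (real k + 1) * (real (m - k))^2) \<le> 1 / ((real k)^2 * (real (m - k))^2)"
      using k by (intro divide_left_mono) auto
  qed (simp add: C_def)
  also have "\<dots> \<le> C * (8 / (real m)^2)"
    unfolding sum_distrib_left[symmetric]
    by (intro mult_left_mono inverse_square_convolution_le) (simp add: C_def)
  also have "\<dots> = real (s + 1) * partition_bound (s + 1) m"
  proof -
    have "real (s + 1) * partition_bound (s + 1) m
        = real (s + 1) * (fact m * 2 * 16^s) / (real (s + 1) * (fact s * (real m)^2))"
      by (simp add: partition_bound_def fact_Suc)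
    also have "\<dots> = fact m * 2 * 16^s / (fact s * (real m)^2)"
      by (rule mult_divide_mult_cancel_left) simp
    also have "(16::real)^s = 16 * 16^(s - 1)" using s by (cases s) auto
    finally show ?thesis using False by (simp add: C_def field_simps)
  qed
  finally show ?thesis .
qed (simp add: partition_bound_def)

lemma partition_sum_block_weight_le:
  assumes "finite S" "s \<ge> 1"
  shows "partition_sum block_weight s S \<le> partition_bound s (card S)"
  using assms(2,1)
proof (induction s arbitrary: S rule: nat_induct_at_least)
  case base
  show ?case
  proof (cases "S = {}")
    case False
    then have "card S \<ge> 1" using base by (auto simp: Suc_le_eq card_gt_0_iff)
    then have "block_weight (card S) \<le> partition_bound 1 (card S)"
      by (rule block_weight_le_partition_bound)
    then show ?thesis by (simp only: partition_sum_one[OF False])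
  qed (simp add: partition_sum_def partitions_into_empty partition_bound_def)
next
  case (Suc s)
  define m where "m = card S"
  define g where "g k = (if k = 0 then 0 else block_weight k * partition_bound s (m - k))" for k
  have "real (Suc s) * partition_sum block_weight (Suc s) S
      = (\<Sum>B\<in>Pow S - {{}}. block_weight (card B) * partition_sum block_weight s (S - B))"
    using partition_sum_rec[OF Suc.prems, of "Suc s"] by simp
  also have "\<dots> \<le> (\<Sum>B\<in>Pow S - {{}}. g (card B))"
  proof (rule sum_mono)
    fix B assume B: "B \<in> Pow S - {{}}"
    then have "finite B" "B \<noteq> {}" "B \<subseteq> S" using Suc.prems finite_subset by auto
    then have "card B \<noteq> 0" "card (S - B) = m - card B"
      by (simp_all add: m_def card_Diff_subset)
    with Suc.IH[of "S - B"] Suc.prems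
    show "block_weight (card B) * partition_sum block_weight s (S - B) \<le> g (card B)"
      by (auto simp: g_def intro!: mult_left_mono block_weight_nonneg)
  qed
  also have "\<dots> = (\<Sum>B\<in>Pow S. g (card B))"
    by (rule sum.mono_neutral_left) (use Suc.prems in \<open>auto simp: g_def\<close>)
  also have "\<dots> = (\<Sum>k\<le>m. real (m choose k) * g k)"
    unfolding m_def by (rule sum_Pow_card) (use Suc.prems in auto)
  also have "\<dots> = (\<Sum>k=1..m-1. real (m choose k) * g k)"
    by (rule sum.mono_neutral_right) (auto simp: g_def partition_bound_def)
  also have "\<dots> = (\<Sum>k=1..m-1. real (m choose k) * (block_weight k * partition_bound s (m - k)))"
    by (rule sum.cong) (auto simp: g_def)
  also have "\<dots> \<le> real (Suc s) * partition_bound (Suc s) m"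
    using binomial_convolution_le[OF Suc.hyps] by simp
  finally show ?case by (simp add: m_def)
qed

section \<open>The prior factor\<close>

lemma pochhammer_mono:
  fixes a b :: real
  shows "0 \<le> a \<Longrightarrow> a \<le> b \<Longrightarrow> pochhammer a n \<le> pochhammer b n"
  unfolding pochhammer_prod by (intro prod_mono) auto

lemma pochhammer_ge_one:
  fixes a :: real
  shows "1 \<le> a \<Longrightarrow> 1 \<le> pochhammer a n"
  unfolding pochhammer_prod by (intro prod_ge_1) auto

lemma pochhammer_ratio_le_exp_harm:
  fixes a b :: real
  assumes "0 < b" "b < a"
  shows "pochhammer b n / pochhammer a n \<le> exp (- ((a - b) / (a + 1)) * harm n)"
proof -
  define c where "c = (a - b) / (a + 1)"
  have "pochhammer b n / pochhammer a n = (\<Prod>k<n. (b + real k) / (a + real k))"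
    by (simp add: pochhammer_prod prod_dividef atLeast0LessThan)
  also have "\<dots> \<le> (\<Prod>k<n. exp (- c * inverse (real (Suc k))))"
  proof (rule prod_mono)
    fix k
    have "(b + real k) / (a + real k) = 1 + (- (a - b) / (a + real k))"
      using assms by (simp add: field_simps)
    also have "\<dots> \<le> exp (- (a - b) / (a + real k))" by (rule exp_ge_add_one_self)
    also have "\<dots> \<le> exp (- c * inverse (real (Suc k)))"
    proof -
      have "a + real k \<le> (a + 1) * real (Suc k)" using assms by (simp add: algebra_simps)
      moreover have "0 < (a + 1) * real (Suc k) * (a + real k)" using assms by simp
      ultimately have "(a - b) / ((a + 1) * real (Suc k)) \<le> (a - b) / (a + real k)"
        using assms by (intro divide_left_mono) auto
      moreover have "c * inverse (real (Suc k)) = (a - b) / ((a + 1) * real (Suc k))"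
        by (simp add: c_def field_simps)
      ultimately have "- (a - b) / (a + real k) \<le> - c * inverse (real (Suc k))"
        by (simp only: minus_divide_left[symmetric] mult_minus_left)
      then show ?thesis by simp
    qed
    finally show "0 \<le> (b + real k) / (a + real k) \<and>
                  (b + real k) / (a + real k) \<le> exp (- c * inverse (real (Suc k)))"
      using assms by auto
  qed
  also have "\<dots> = exp (- c * harm n)"
    by (simp add: exp_sum[symmetric] harm_altdef sum_distrib_left)
  finally show ?thesis unfolding c_def .
qed

lemma pochhammer_ratio_tendsto_zero:
  fixes a b :: real
  assumes "0 < b" "b < a"
  shows "(\<lambda>n. pochhammer b n / pochhammer a n) \<longlonglongrightarrow> 0"
proof (rule tendsto_sandwich[OF _ _ tendsto_const])
  define c where "c = (a - b) / (a + 1)"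
  have "c > 0" using assms by (simp add: c_def)
  show "\<forall>\<^sub>F n in sequentially. pochhammer b n / pochhammer a n \<le> exp (- c * harm n)"
    unfolding c_def by (intro always_eventually allI pochhammer_ratio_le_exp_harm[OF assms])
  have "filterlim (\<lambda>n. c * harm n) at_top sequentially"
    using harm_at_top \<open>c > 0\<close> by (intro filterlim_tendsto_pos_mult_at_top[OF tendsto_const]) auto
  then have "filterlim (\<lambda>n. - c * harm n) at_bot sequentially"
    by (simp add: filterlim_uminus_at_bot)
  then show "(\<lambda>n. exp (- c * harm n)) \<longlonglongrightarrow> 0"
    using exp_at_bot filterlim_compose by blast
  show "\<forall>\<^sub>F n in sequentially. 0 \<le> pochhammer b n / pochhammer a n"
    using assms by (simp add: pochhammer_nonneg)
qed

text \<open>The bound of assumption A3 on the \<open>j\<close>-th moment of the prior, times the weight \<open>16\<^sup>j/(j + 1)!\<close>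
  that it receives in \<open>prior_weight_ratio_sum\<close>.\<close>
definition moment_series_term :: "real \<Rightarrow> real \<Rightarrow> nat \<Rightarrow> real" where
  "moment_series_term \<nu> \<rho> j = 16^j * (1 / \<rho>^j) * Gamma (\<nu> + real j + 1) / fact (j + 1)"

lemma moment_series_term_nonneg: "\<nu> > 0 \<Longrightarrow> \<rho> > 0 \<Longrightarrow> moment_series_term \<nu> \<rho> j \<ge> 0"
  unfolding moment_series_term_def by (simp add: Gamma_real_pos less_imp_le)

lemma summable_moment_series_term:
  assumes \<nu>: "\<nu> > 0" and \<rho>: "\<rho> > 32"
  shows "summable (moment_series_term \<nu> \<rho>)"
proof (rule summable_ratio_test[where c = "32 / \<rho>" and N = "nat \<lceil>\<nu>\<rceil>"])
  show "32 / \<rho> < 1" using \<rho> by simp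
  fix j assume j: "j \<ge> nat \<lceil>\<nu>\<rceil>"
  have "\<nu> + real j + 1 \<notin> \<int>\<^sub>\<le>\<^sub>0" using \<nu> by (auto dest: nonpos_Ints_nonpos)
  then have "Gamma (\<nu> + real (Suc j) + 1) = (\<nu> + real j + 1) * Gamma (\<nu> + real j + 1)"
    using Gamma_plus1[of "\<nu> + real j + 1"] by (simp add: add_ac)
  moreover have "(fact (Suc j + 1) :: real) = (real j + 2) * fact (j + 1)"
    by (simp add: algebra_simps)
  ultimately have step: "moment_series_term \<nu> \<rho> (Suc j)
      = moment_series_term \<nu> \<rho> j * ((16 / \<rho>) * ((\<nu> + real j + 1) / (real j + 2)))"
    using \<nu> \<rho> by (simp add: moment_series_term_def field_simps)
  have "(\<nu> + real j + 1) / (real j + 2) \<le> 2" using j by (simp add: divide_le_eq)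
  then have "moment_series_term \<nu> \<rho> (Suc j) \<le> moment_series_term \<nu> \<rho> j * ((16 / \<rho>) * 2)"
    unfolding step using \<nu> \<rho>
    by (intro mult_left_mono moment_series_term_nonneg) auto
  then have "moment_series_term \<nu> \<rho> (Suc j) \<le> 32 / \<rho> * moment_series_term \<nu> \<rho> j"
    by (simp add: algebra_simps)
  then show "norm (moment_series_term \<nu> \<rho> (Suc j)) \<le> 32 / \<rho> * norm (moment_series_term \<nu> \<rho> j)"
    using moment_series_term_nonneg[of \<nu> \<rho>] \<nu> \<rho> by simp
qed

lemma sum_moment_series_term_le:
  assumes "\<nu> > 0" "\<rho> > 32"
  shows "(\<Sum>r=2..n. moment_series_term \<nu> \<rho> (r - 1)) \<le> suminf (moment_series_term \<nu> \<rho>)"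
proof -
  have "(\<Sum>r=2..n. moment_series_term \<nu> \<rho> (r - 1)) = (\<Sum>j=1..n-1. moment_series_term \<nu> \<rho> j)"
    by (rule sum.reindex_bij_witness[where i = "\<lambda>j. j + 1" and j = "\<lambda>r. r - 1"]) auto
  also have "\<dots> \<le> suminf (moment_series_term \<nu> \<rho>)"
    using assms by (intro sum_le_suminf summable_moment_series_term moment_series_term_nonneg) auto
  finally show ?thesis .
qed

lemma sum_power_div_fact_le:
  fixes q :: real
  assumes q: "0 \<le> q" "q \<le> 1/2"
  shows "(\<Sum>r=2..n. q^(r - 1) / fact r) \<le> 4 * q"
proof -
  have "(\<Sum>r=2..n. q^(r - 1) / fact r) \<le> (\<Sum>r=2..n. q * (1/2)^(r - 2))"
  proof (rule sum_mono)
    fix r assume r: "r \<in> {2..n}"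
    then have e: "r - 1 = Suc (r - 2)" by auto
    have "q^(r - 1) / fact r \<le> q^(r - 1)"
      using q by (simp add: divide_le_eq fact_ge_1 mult_le_cancel_left1)
    also have "\<dots> \<le> q * (1/2)^(r - 2)"
      unfolding e using q by (simp add: mult_left_mono power_mono)
    finally show "q^(r - 1) / fact r \<le> q * (1/2)^(r - 2)" .
  qed
  also have "\<dots> = q * (\<Sum>j<n - 1. (1/2)^j)"
  proof -
    have "(\<Sum>r=2..n. (1/2::real)^(r - 2)) = (\<Sum>j<n - 1. (1/2)^j)"
      by (rule sum.reindex_bij_witness[where i = "\<lambda>j. j + 2" and j = "\<lambda>r. r - 2"]) auto
    then show ?thesis by (simp only: sum_distrib_left[symmetric])
  qed
  also have "\<dots> \<le> q * 2"
    using q by (intro mult_left_mono) (auto simp: sum_gp_strict)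
  finally show ?thesis using q by linarith
qed

definition prior_weight :: "(real \<Rightarrow> real) \<Rightarrow> nat \<Rightarrow> nat \<Rightarrow> real" where
  "prior_weight prior n s = (LINT \<alpha>:{0<..}|lborel. \<alpha> ^ s / pochhammer \<alpha> n * prior \<alpha>)"

text \<open>The factor \<open>16\<^sup>r\<^sup>-\<^sup>1/r!\<close> is what remains of \<open>partition_bound r n\<close> after normalising by the
  one-cluster weight.\<close>
definition prior_weight_ratio_sum :: "(real \<Rightarrow> real) \<Rightarrow> nat \<Rightarrow> real" where
  "prior_weight_ratio_sum prior n =
     (\<Sum>r=2..n. prior_weight prior n r / prior_weight prior n 1 * 16^(r - 1) / fact r)"

locale prior_density =
  fixes prior :: "real \<Rightarrow> real"
  assumes measurable_prior[measurable]: "prior \<in> borel_measurable borel"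
    and prior_nonneg: "\<And>a. 0 \<le> prior a"
    and prior_nonpos: "\<And>a. a \<le> 0 \<Longrightarrow> prior a = 0"
    and prior_total: "(\<integral>\<^sup>+ a. ennreal (prior a) \<partial>lborel) = 1"
begin

definition integrand :: "nat \<Rightarrow> nat \<Rightarrow> real \<Rightarrow> real" where
  "integrand n s \<alpha> = indicator {0<..} \<alpha> * (\<alpha> ^ s / pochhammer \<alpha> n * prior \<alpha>)"

lemma measurable_integrand[measurable]: "integrand n s \<in> borel_measurable borel"
proof -
  have "(\<lambda>\<alpha>::real. pochhammer \<alpha> n) \<in> borel_measurable borel"
    unfolding pochhammer_prod by measurable
  then show ?thesis unfolding integrand_def by measurable
qed

lemma integrand_nonneg: "integrand n s \<alpha> \<ge> 0"
  unfolding integrand_def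
  by (cases "\<alpha> > 0") (auto intro!: mult_nonneg_nonneg divide_nonneg_nonneg pochhammer_nonneg prior_nonneg)

lemma integrand_eq:
  assumes "n \<ge> 1" "s \<ge> 1" "\<alpha> > 0"
  shows "integrand n s \<alpha> = \<alpha>^(s - 1) * prior \<alpha> / pochhammer (\<alpha> + 1) (n - 1)"
proof -
  have "pochhammer \<alpha> n = \<alpha> * pochhammer (\<alpha> + 1) (n - 1)" "\<alpha> ^ s = \<alpha> * \<alpha>^(s - 1)"
    using assms pochhammer_rec[of \<alpha> "n - 1"] power_Suc[of \<alpha> "s - 1"] by simp_all
  then show ?thesis using assms by (simp add: integrand_def)
qed

lemma prior_weight_eq_integral: "prior_weight prior n s = integral\<^sup>L lborel (integrand n s)"
  unfolding prior_weight_def set_lebesgue_integral_def integrand_def by (simp add: mult.assoc)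

lemma prior_weight_nonneg: "prior_weight prior n s \<ge> 0"
  unfolding prior_weight_eq_integral by (intro Bochner_Integration.integral_nonneg integrand_nonneg)

lemma integrable_prior: "integrable lborel prior"
  by (rule integrableI_nn_integral_finite[where x = 1]) (auto simp: prior_nonneg prior_total)

lemma integrable_integrand_one:
  assumes "n \<ge> 1"
  shows "integrable lborel (integrand n 1)"
proof (rule Bochner_Integration.integrable_bound[OF integrable_prior])
  show "AE \<alpha> in lborel. norm (integrand n 1 \<alpha>) \<le> norm (prior \<alpha>)"
  proof (intro AE_I2)
    fix \<alpha>
    show "norm (integrand n 1 \<alpha>) \<le> norm (prior \<alpha>)"
    proof (cases "\<alpha> > 0")
      case True
      have "1 \<le> pochhammer (\<alpha> + 1) (n - 1)" using True by (intro pochhammer_ge_one) simp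
      then show ?thesis using True assms prior_nonneg[of \<alpha>] integrand_nonneg[of n 1 \<alpha>]
        by (simp add: integrand_eq divide_le_eq mult_le_cancel_left1)
    qed (simp add: integrand_def)
  qed
qed simp

lemma prior_weight_one_ge:
  assumes n: "n \<ge> 1" and b: "b > 0"
  shows "(LINT \<alpha>:{0<..b}|lborel. prior \<alpha>) / pochhammer (b + 1) (n - 1) \<le> prior_weight prior n 1"
proof -
  define Q where "Q = pochhammer (b + 1) (n - 1)"
  have Q: "Q > 0" using b by (simp add: Q_def pochhammer_pos)
  have "indicator {0<..b} \<alpha> * prior \<alpha> / Q \<le> integrand n 1 \<alpha>" for \<alpha>
  proof (cases "\<alpha> \<in> {0<..b}")
    case True
    then have "pochhammer (\<alpha> + 1) (n - 1) \<le> Q" unfolding Q_def by (intro pochhammer_mono) auto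
    moreover have "0 < pochhammer (\<alpha> + 1) (n - 1)" using True by (simp add: pochhammer_pos)
    ultimately have "prior \<alpha> / Q \<le> prior \<alpha> / pochhammer (\<alpha> + 1) (n - 1)"
      using prior_nonneg[of \<alpha>] by (intro divide_left_mono) auto
    then show ?thesis using True n by (simp add: integrand_eq)
  qed (simp add: integrand_nonneg)
  then have "(LINT \<alpha>|lborel. indicator {0<..b} \<alpha> * prior \<alpha> / Q) \<le> prior_weight prior n 1"
    unfolding prior_weight_eq_integral
    by (intro integral_mono' integrable_integrand_one n integrand_nonneg)
  then show ?thesis by (simp add: Q_def set_lebesgue_integral_def)
qed

lemma moment_nonneg: "\<alpha>^k * prior \<alpha> \<ge> 0"
  using prior_nonneg prior_nonpos[of \<alpha>] by (cases "\<alpha> > 0") auto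

lemma integrable_moment_le:
  assumes M: "M \<ge> 0" and moment: "(\<integral>\<^sup>+\<alpha>. ennreal (\<alpha>^k * prior \<alpha>) \<partial>lborel) \<le> ennreal M"
  shows "integrable lborel (\<lambda>\<alpha>. \<alpha>^k * prior \<alpha>)" "(LINT \<alpha>|lborel. \<alpha>^k * prior \<alpha>) \<le> M"
proof -
  have "(\<integral>\<^sup>+\<alpha>. ennreal (\<alpha>^k * prior \<alpha>) \<partial>lborel) < \<infinity>"
    using order.strict_trans1[OF moment] by simp
  then show int: "integrable lborel (\<lambda>\<alpha>. \<alpha>^k * prior \<alpha>)"
    by (intro integrableI_nonneg) (auto simp: moment_nonneg)
  have "(\<integral>\<^sup>+\<alpha>. ennreal (\<alpha>^k * prior \<alpha>) \<partial>lborel) = ennreal (LINT \<alpha>|lborel. \<alpha>^k * prior \<alpha>)"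
    using int by (intro nn_integral_eq_integral) (auto simp: moment_nonneg)
  then show "(LINT \<alpha>|lborel. \<alpha>^k * prior \<alpha>) \<le> M"
    using moment M by (simp add: ennreal_le_iff)
qed

text \<open>Split the integral at \<open>a\<close>: below \<open>a\<close> the factor \<open>\<alpha>\<^sup>s\<^sup>-\<^sup>1\<close> is at most \<open>a\<^sup>s\<^sup>-\<^sup>1\<close>; above \<open>a\<close> the
  rising factorial is at least \<open>(a + 1)\<^sup>(\<^sup>n\<^sup>-\<^sup>1\<^sup>)\<close>, which leaves a moment of the prior.\<close>
lemma prior_weight_le:
  assumes n: "n \<ge> 1" and s: "s \<ge> 1" and a: "a > 0" and M: "M \<ge> 0"
    and moment: "(\<integral>\<^sup>+\<alpha>. ennreal (\<alpha>^(s - 1) * prior \<alpha>) \<partial>lborel) \<le> ennreal M"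
  shows "prior_weight prior n s \<le> a^(s - 1) * prior_weight prior n 1 + M / pochhammer (a + 1) (n - 1)"
proof -
  define Q where "Q = pochhammer (a + 1) (n - 1)"
  have Q: "Q > 0" using a by (simp add: Q_def pochhammer_pos)
  define g where "g = (\<lambda>\<alpha>. \<alpha>^(s - 1) * prior \<alpha>)"
  have g_nonneg: "g \<alpha> \<ge> 0" for \<alpha>
    unfolding g_def by (rule moment_nonneg)
  have int: "integrable lborel g" and int_g: "integral\<^sup>L lborel g \<le> M"
    unfolding g_def by (fact integrable_moment_le[OF M moment])+
  have pointwise: "integrand n s \<alpha> \<le> a^(s - 1) * integrand n 1 \<alpha> + g \<alpha> / Q" for \<alpha>
  proof (cases "\<alpha> > 0")
    case True
    have split: "integrand n s \<alpha> = \<alpha>^(s - 1) * integrand n 1 \<alpha>"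
      using True n s by (simp add: integrand_eq)
    show ?thesis
    proof (cases "\<alpha> \<le> a")
      case True
      then have "\<alpha>^(s - 1) * integrand n 1 \<alpha> \<le> a^(s - 1) * integrand n 1 \<alpha>"
        using \<open>\<alpha> > 0\<close> by (intro mult_right_mono power_mono integrand_nonneg) auto
      moreover have "0 \<le> g \<alpha> / Q" using g_nonneg[of \<alpha>] Q by simp
      ultimately show ?thesis using split by linarith
    next
      case False
      then have "Q \<le> pochhammer (\<alpha> + 1) (n - 1)" unfolding Q_def using a by (intro pochhammer_mono) auto
      then have "integrand n s \<alpha> \<le> g \<alpha> / Q"
        using \<open>\<alpha> > 0\<close> n s Q g_nonneg[of \<alpha>]
        by (simp add: integrand_eq g_def divide_left_mono)
      moreover have "0 \<le> a^(s - 1) * integrand n 1 \<alpha>" using a by (simp add: integrand_nonneg)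
      ultimately show ?thesis by linarith
    qed
  qed (use g_nonneg Q in \<open>simp add: integrand_def\<close>)
  have "prior_weight prior n s \<le> (LINT \<alpha>|lborel. a^(s - 1) * integrand n 1 \<alpha> + g \<alpha> / Q)"
    unfolding prior_weight_eq_integral
    using pointwise a Q g_nonneg integrand_nonneg int integrable_integrand_one[OF n]
    by (intro integral_mono') auto
  also have "\<dots> = a^(s - 1) * prior_weight prior n 1 + integral\<^sup>L lborel g / Q"
    using int integrable_integrand_one[OF n] by (simp add: prior_weight_eq_integral)
  also have "\<dots> \<le> a^(s - 1) * prior_weight prior n 1 + M / Q"
    using int_g Q by (simp add: divide_right_mono)
  finally show ?thesis by (simp add: Q_def)
qed


lemma prior_mass_pos:
  assumes \<epsilon>: "\<epsilon> > 0" "\<And>a. a \<in> {0<..<\<epsilon>} \<Longrightarrow> prior a > 0" and b: "b > 0"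
  shows "(LINT \<alpha>:{0<..b}|lborel. prior \<alpha>) > 0"
proof -
  define f where "f = (\<lambda>\<alpha>. indicator {0<..b} \<alpha> * prior \<alpha>)"
  have int: "integrable lborel f"
    unfolding f_def using integrable_mult_indicator[OF _ integrable_prior, of "{0<..b}"] by simp
  have "\<not> (AE \<alpha> in lborel. f \<alpha> = 0)"
  proof
    assume "AE \<alpha> in lborel. f \<alpha> = 0"
    then have "AE \<alpha> in lborel. \<alpha> \<notin> {0<..<min b \<epsilon>}"
      by eventually_elim (use \<epsilon> in \<open>force simp: f_def\<close>)
    then have "emeasure lborel {\<alpha> \<in> space lborel. \<not> \<alpha> \<notin> {0<..<min b \<epsilon>}} = 0"
      by (subst (asm) AE_iff_measurable[OF _ refl]) simp_all
    moreover have "{\<alpha> \<in> space lborel. \<not> \<alpha> \<notin> {0<..<min b \<epsilon>}} = {0<..<min b \<epsilon>}" by auto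
    ultimately show False using b \<epsilon> by simp
  qed
  then have "integral\<^sup>L lborel f \<noteq> 0"
    using integral_nonneg_eq_0_iff_AE[OF int] by (simp add: f_def prior_nonneg)
  moreover have "integral\<^sup>L lborel f \<ge> 0"
    by (simp add: f_def prior_nonneg)
  ultimately have "integral\<^sup>L lborel f > 0" by linarith
  then show ?thesis by (simp add: f_def set_lebesgue_integral_def)
qed

lemma prior_weight_one_pos:
  assumes "\<epsilon> > 0" "\<And>a. a \<in> {0<..<\<epsilon>} \<Longrightarrow> prior a > 0" and n: "n \<ge> 1"
  shows "prior_weight prior n 1 > 0"
proof -
  have "0 < (LINT \<alpha>:{0<..1}|lborel. prior \<alpha>) / pochhammer (1 + 1) (n - 1)"
    using prior_mass_pos[OF assms(1,2), of 1] by (simp add: pochhammer_pos)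
  also have "\<dots> \<le> prior_weight prior n 1"
    by (rule prior_weight_one_ge[OF n]) simp
  finally show ?thesis .
qed

lemma prior_weight_ratio_le:
  assumes n: "n \<ge> 1" and r: "r \<ge> 1" and a: "a > 0" and b: "b > 0"
    and mass: "(LINT \<alpha>:{0<..b}|lborel. prior \<alpha>) > 0"
    and M: "M \<ge> 0" "(\<integral>\<^sup>+\<alpha>. ennreal (\<alpha>^(r - 1) * prior \<alpha>) \<partial>lborel) \<le> ennreal M"
  shows "prior_weight prior n r / prior_weight prior n 1
         \<le> a^(r - 1) + pochhammer (b + 1) (n - 1) / pochhammer (a + 1) (n - 1)
                       * (M / (LINT \<alpha>:{0<..b}|lborel. prior \<alpha>))"
proof -
  define m Qa Qb where "m = (LINT \<alpha>:{0<..b}|lborel. prior \<alpha>)"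
    and "Qa = pochhammer (a + 1) (n - 1)" and "Qb = pochhammer (b + 1) (n - 1)"
  have pos: "m > 0" "Qa > 0" "Qb > 0"
    using mass a b by (simp_all add: m_def Qa_def Qb_def pochhammer_pos)
  have lower: "m / Qb \<le> prior_weight prior n 1"
    unfolding m_def Qb_def by (rule prior_weight_one_ge[OF n b])
  moreover have "m / Qb > 0" using pos by simp
  ultimately have I1: "prior_weight prior n 1 > 0" by linarith
  have "prior_weight prior n r / prior_weight prior n 1
      \<le> (a^(r - 1) * prior_weight prior n 1 + M / Qa) / prior_weight prior n 1"
    unfolding Qa_def by (rule divide_right_mono[OF prior_weight_le[OF n r a M]]) (use I1 in simp)
  also have "\<dots> = a^(r - 1) + M / (Qa * prior_weight prior n 1)"
    using I1 by (simp add: field_simps)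
  also have "M / (Qa * prior_weight prior n 1) \<le> M / (Qa * (m / Qb))"
    using lower pos M I1 by (intro divide_left_mono mult_left_mono mult_pos_pos) auto
  also have "M / (Qa * (m / Qb)) = Qb / Qa * (M / m)"
    using pos by (simp add: field_simps)
  finally show ?thesis by (simp add: m_def Qa_def Qb_def)
qed

lemma prior_weight_ratio_sum_le:
  assumes n: "n \<ge> 1" and a: "0 < a" "a \<le> 1/32" and b: "b > 0"
    and mass: "(LINT \<alpha>:{0<..b}|lborel. prior \<alpha>) > 0"
    and D: "D \<ge> 0" and \<nu>: "\<nu> > 0" and \<rho>: "\<rho> > 32"
    and moments: "\<And>s. s \<ge> 1 \<Longrightarrow>
       (\<integral>\<^sup>+\<alpha>. ennreal (\<alpha>^s * prior \<alpha>) \<partial>lborel) \<le> ennreal (D * (1 / \<rho>^s) * Gamma (\<nu> + real s + 1))"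
  shows "prior_weight_ratio_sum prior n
         \<le> 64 * a + pochhammer (b + 1) (n - 1) / pochhammer (a + 1) (n - 1)
                     * (D / (LINT \<alpha>:{0<..b}|lborel. prior \<alpha>)) * suminf (moment_series_term \<nu> \<rho>)"
proof -
  define R where "R = pochhammer (b + 1) (n - 1) / pochhammer (a + 1) (n - 1)
                      / (LINT \<alpha>:{0<..b}|lborel. prior \<alpha>)"
  have R: "R \<ge> 0" using a b mass by (simp add: R_def pochhammer_pos less_imp_le)
  have summand: "prior_weight prior n r / prior_weight prior n 1 * 16^(r - 1) / fact r
      \<le> (16 * a)^(r - 1) / fact r + R * D * moment_series_term \<nu> \<rho> (r - 1)" if r: "r \<in> {2..n}" for r
  proof -
    define M where "M = D * (1 / \<rho>^(r - 1)) * Gamma (\<nu> + real (r - 1) + 1)"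
    have M: "M \<ge> 0" using D \<rho> \<nu> by (simp add: M_def Gamma_real_pos less_imp_le)
    have "(\<integral>\<^sup>+\<alpha>. ennreal (\<alpha>^(r - 1) * prior \<alpha>) \<partial>lborel) \<le> ennreal M"
      using moments[of "r - 1"] r by (auto simp: M_def)
    from prior_weight_ratio_le[OF n _ a(1) b mass M this] r
    have "prior_weight prior n r / prior_weight prior n 1 \<le> a^(r - 1) + R * M"
      by (simp add: R_def)
    then have "prior_weight prior n r / prior_weight prior n 1 * 16^(r - 1) / fact r
        \<le> (a^(r - 1) + R * M) * 16^(r - 1) / fact r"
      by (intro divide_right_mono mult_right_mono) auto
    also have "\<dots> = (16 * a)^(r - 1) / fact r + R * D * moment_series_term \<nu> \<rho> (r - 1)"
      using r by (simp add: M_def moment_series_term_def power_mult_distrib field_simps)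
    finally show ?thesis .
  qed
  have "prior_weight_ratio_sum prior n
      \<le> (\<Sum>r=2..n. (16 * a)^(r - 1) / fact r) + R * D * (\<Sum>r=2..n. moment_series_term \<nu> \<rho> (r - 1))"
    unfolding prior_weight_ratio_sum_def sum_distrib_left sum.distrib[symmetric]
    by (rule sum_mono) (rule summand)
  also have "\<dots> \<le> 64 * a + R * D * suminf (moment_series_term \<nu> \<rho>)"
    using sum_power_div_fact_le[of "16 * a" n] sum_moment_series_term_le[OF \<nu> \<rho>, of n] a R D
    by (intro add_mono mult_left_mono) auto
  finally show ?thesis by (simp add: R_def)
qed

text \<open>The bound of \<open>prior_weight_ratio_sum_le\<close> is \<open>64 a\<close> plus a term that vanishes as \<open>n \<rightarrow> \<infinity>\<close>, for
  every \<open>a > 0\<close>.\<close>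
theorem prior_weight_ratio_sum_tendsto_zero:
  assumes \<epsilon>: "\<epsilon> > 0" "\<And>a. a \<in> {0<..<\<epsilon>} \<Longrightarrow> prior a > 0"
    and D: "D \<ge> 0" and \<nu>: "\<nu> > 0" and \<rho>: "\<rho> > 32"
    and moments: "\<And>s. s \<ge> 1 \<Longrightarrow>
       (\<integral>\<^sup>+\<alpha>. ennreal (\<alpha>^s * prior \<alpha>) \<partial>lborel) \<le> ennreal (D * (1 / \<rho>^s) * Gamma (\<nu> + real s + 1))"
  shows "prior_weight_ratio_sum prior \<longlonglongrightarrow> 0"
proof (rule order_tendstoI)
  fix y :: real assume "y < 0"
  then show "\<forall>\<^sub>F n in sequentially. y < prior_weight_ratio_sum prior n"
    by (intro always_eventually allI, unfold prior_weight_ratio_sum_def)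
       (smt (verit) sum_nonneg divide_nonneg_nonneg mult_nonneg_nonneg prior_weight_nonneg
          zero_le_power fact_ge_zero)
next
  fix \<eta> :: real assume \<eta>: "\<eta> > 0"
  define a where "a = min (1/32) (\<eta> / 128)"
  have a: "0 < a" "a \<le> 1/32" "64 * a < \<eta>" using \<eta> by (auto simp: a_def)
  define b where "b = a / 2"
  have b: "0 < b" "b < a" using a by (auto simp: b_def)
  define m where "m = (LINT \<alpha>:{0<..b}|lborel. prior \<alpha>)"
  have m: "m > 0" unfolding m_def by (rule prior_mass_pos[OF \<epsilon> b(1)])
  define C where "C = D / m * suminf (moment_series_term \<nu> \<rho>)"
  have "(\<lambda>n. pochhammer (b + 1) n / pochhammer (a + 1) n) \<longlonglongrightarrow> 0"
    using b by (intro pochhammer_ratio_tendsto_zero) auto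
  then have "(\<lambda>n. pochhammer (b + 1) (n - 1) / pochhammer (a + 1) (n - 1)) \<longlonglongrightarrow> 0"
    by (rule filterlim_compose) (rule filterlim_minus_const_nat_at_top)
  then have "(\<lambda>n. pochhammer (b + 1) (n - 1) / pochhammer (a + 1) (n - 1) * C) \<longlonglongrightarrow> 0 * C"
    by (rule tendsto_mult_right)
  then have "\<forall>\<^sub>F n in sequentially. pochhammer (b + 1) (n - 1) / pochhammer (a + 1) (n - 1) * C < \<eta> - 64 * a"
    using a by (intro order_tendstoD(2)) auto
  moreover have "\<forall>\<^sub>F n in sequentially. n \<ge> 1" by (rule eventually_ge_at_top)
  ultimately show "\<forall>\<^sub>F n in sequentially. prior_weight_ratio_sum prior n < \<eta>"
  proof eventually_elim
    case (elim n)
    have "prior_weight_ratio_sum prior n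
        \<le> 64 * a + pochhammer (b + 1) (n - 1) / pochhammer (a + 1) (n - 1) * C"
      using prior_weight_ratio_sum_le[OF elim(2) a(1,2) b(1) m[unfolded m_def] D \<nu> \<rho> moments]
      by (simp add: C_def m_def mult.assoc)
    with elim(1) show ?case by linarith
  qed
qed

end

section \<open>The uniform model\<close>

lemma (in prob_space) Markov_inequality_nn:
  assumes f: "f \<in> borel_measurable M" "\<And>x. f x \<ge> 0" and a: "a > 0"
    and B: "(\<integral>\<^sup>+x. ennreal (f x) \<partial>M) \<le> ennreal B" "B \<ge> 0"
  shows "measure M {x\<in>space M. a \<le> f x} \<le> B / a"
proof -
  have s: "{x\<in>space M. a \<le> f x} = {x\<in>space M. 1 \<le> ennreal (1/a) * ennreal (f x)}"
    using a f by (auto simp: ennreal_mult[symmetric] ennreal_1[symmetric] field_simps simp del: ennreal_1)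
  have "emeasure M {x\<in>space M. a \<le> f x} \<le> ennreal (1/a) * (\<integral>\<^sup>+x. ennreal (f x) * indicator (space M) x \<partial>M)"
    unfolding s by (rule nn_integral_Markov_inequality) (use f in auto)
  also have "(\<integral>\<^sup>+x. ennreal (f x) * indicator (space M) x \<partial>M) = (\<integral>\<^sup>+x. ennreal (f x) \<partial>M)"
    by (rule nn_integral_cong) simp
  also have "ennreal (1/a) * (\<integral>\<^sup>+x. ennreal (f x) \<partial>M) \<le> ennreal (B / a)"
    using mult_left_mono[OF B(1), of "ennreal (1/a)"] a B by (simp add: ennreal_mult[symmetric])
  finally show ?thesis using a B by (simp add: emeasure_eq_measure)
qed

lemma nn_integral_power_decay_le:
  fixes c :: real and a :: nat
  assumes c: "c > 0"
  shows "(\<integral>\<^sup>+u. ennreal (indicator {0..c} u * (1 - u / (2 * c))^a) \<partial>lborel) \<le> ennreal (2 * c / (a + 1))"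
proof -
  define F where "F u = - (2 * c / (a + 1)) * (1 - u / (2 * c))^(a + 1)" for u
  have "(F has_real_derivative (1 - u / (2 * c))^a) (at u within {0..c})" for u
  proof -
    have "((\<lambda>u. 1 - u / (2 * c)) has_real_derivative - (1 / (2 * c))) (at u within {0..c})"
      using c by (auto intro!: derivative_eq_intros)
    from DERIV_cmult[OF DERIV_power[OF this, of "a + 1"], of "- (2 * c / (a + 1))"]
    have "(F has_real_derivative
            - (2 * c / (a + 1)) * (real (a + 1) * (- (1 / (2 * c)) * (1 - u / (2 * c))^(a + 1 - Suc 0))))
            (at u within {0..c})"
      unfolding F_def .
    moreover have "- (2 * c / (a + 1)) * (real (a + 1) * (- (1 / (2 * c)) * X)) = X" for X :: real
      using c by (simp add: divide_simps)
    ultimately show ?thesis using c by simp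
  qed
  then have integral: "((\<lambda>u. (1 - u / (2 * c))^a) has_integral (F c - F 0)) {0..c}"
    using c by (intro fundamental_theorem_of_calculus) (auto simp: has_real_derivative_iff_has_vector_derivative)
  have nonneg: "0 \<le> (1 - u / (2 * c))^a" if "u \<in> {0..c}" for u
    using that c by (simp add: field_simps)
  have "(\<integral>\<^sup>+u. ennreal (indicator {0..c} u * (1 - u / (2 * c))^a) \<partial>lborel) = ennreal (F c - F 0)"
    using nn_integral_has_integral_lebesgue[OF nonneg integral] by simp
  also have "F c - F 0 \<le> 2 * c / (a + 1)"
    using c by (simp add: F_def)
  finally show ?thesis by (simp add: ennreal_leI)
qed

lemma nn_integral_tent_power_le:
  fixes t c :: real and a :: nat
  assumes c: "c > 0"
  shows "(\<integral>\<^sup>+\<theta>. ennreal (indicator {t - c<..<t + c} \<theta> * (1 - \<bar>\<theta> - t\<bar> / (2 * c))^a) \<partial>lborel)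
         \<le> ennreal (4 * c / (a + 1))"
proof -
  define h where "h u = ennreal (indicator {0..c} u * (1 - u / (2 * c))^a)" for u
  have h_meas[measurable]: "h \<in> borel_measurable borel"
    unfolding h_def by measurable
  have tent: "ennreal (indicator {t - c<..<t + c} \<theta> * (1 - \<bar>\<theta> - t\<bar> / (2 * c))^a) \<le> h (\<theta> - t) + h (t - \<theta>)"
    for \<theta>
  proof (cases "\<theta> \<in> {t - c<..<t + c}")
    case True
    show ?thesis
    proof (cases "\<theta> \<le> t")
      case True
      with \<open>\<theta> \<in> {t - c<..<t + c}\<close>
      have "ennreal (indicator {t - c<..<t + c} \<theta> * (1 - \<bar>\<theta> - t\<bar> / (2 * c))^a) = h (t - \<theta>)"
        by (simp add: h_def)
      then show ?thesis by (simp add: add_increasing)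
    next
      case False
      with \<open>\<theta> \<in> {t - c<..<t + c}\<close>
      have "ennreal (indicator {t - c<..<t + c} \<theta> * (1 - \<bar>\<theta> - t\<bar> / (2 * c))^a) = h (\<theta> - t)"
        by (simp add: h_def)
      then show ?thesis by (simp add: add_increasing2)
    qed
  qed simp
  have translate: "(\<integral>\<^sup>+\<theta>. h (\<theta> - t) \<partial>lborel) = (\<integral>\<^sup>+u. h u \<partial>lborel)"
    using nn_integral_real_affine[OF h_meas, of 1 "- t"] by simp
  have reflect: "(\<integral>\<^sup>+\<theta>. h (t - \<theta>) \<partial>lborel) = (\<integral>\<^sup>+u. h u \<partial>lborel)"
    using nn_integral_real_affine[OF h_meas, of "- 1" t] by simp
  have "(\<integral>\<^sup>+\<theta>. ennreal (indicator {t - c<..<t + c} \<theta> * (1 - \<bar>\<theta> - t\<bar> / (2 * c))^a) \<partial>lborel)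
      \<le> (\<integral>\<^sup>+\<theta>. h (\<theta> - t) + h (t - \<theta>) \<partial>lborel)"
    by (intro nn_integral_mono tent)
  also have "\<dots> = (\<integral>\<^sup>+\<theta>. h (\<theta> - t) \<partial>lborel) + (\<integral>\<^sup>+\<theta>. h (t - \<theta>) \<partial>lborel)"
  proof (rule nn_integral_add)
    show "(\<lambda>\<theta>. h (\<theta> - t)) \<in> borel_measurable lborel" "(\<lambda>\<theta>. h (t - \<theta>)) \<in> borel_measurable lborel"
      by (rule measurable_compose[OF _ h_meas], simp)+
  qed
  also have "\<dots> \<le> ennreal (2 * c / (a + 1)) + ennreal (2 * c / (a + 1))"
    using nn_integral_power_decay_le[OF c, of a] reflect translate
    by (intro add_mono) (simp_all add: h_def)
  also have "\<dots> = ennreal (4 * c / (a + 1))"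
    using c by (simp add: ennreal_plus[symmetric] del: ennreal_plus)
  finally show ?thesis .
qed

lemma tendsto_zero_if_eventually_le_inverse:
  fixes f r :: "nat \<Rightarrow> real" and C :: "real \<Rightarrow> real"
  assumes f: "\<And>n. 0 \<le> f n" and r: "r \<longlonglongrightarrow> 0"
    and bound: "\<And>K. K \<ge> 1 \<Longrightarrow> \<forall>\<^sub>F n in sequentially. f n \<le> 1 / K + C K * r n"
  shows "f \<longlonglongrightarrow> 0"
proof (rule order_tendstoI)
  fix y :: real assume "y < 0"
  then show "\<forall>\<^sub>F n in sequentially. y < f n" using f by (simp add: order.strict_trans2)
next
  fix \<eta> :: real assume \<eta>: "\<eta> > 0"
  define K where "K = max 1 (2 / \<eta>)"
  have K: "K \<ge> 1" "1 / K \<le> \<eta> / 2"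
    using \<eta> by (auto simp: K_def divide_le_eq max_def field_simps)
  have "(\<lambda>n. C K * r n) \<longlonglongrightarrow> 0" using r by (rule tendsto_mult_right_zero)
  then have "\<forall>\<^sub>F n in sequentially. C K * r n < \<eta> / 2" using \<eta> by (intro order_tendstoD(2)) auto
  with bound[OF K(1)] show "\<forall>\<^sub>F n in sequentially. f n < \<eta>"
    by eventually_elim (use K(2) in linarith)
qed

locale uniform_model =
  fixes \<theta>s c :: real
  assumes c_pos: "c > 0"
begin

definition "support = {\<theta>s - c<..<\<theta>s + c}"
definition "U = uniform_measure lborel support"
definition "P = PiM UNIV (\<lambda>_::nat. U)"

lemma emeasure_support: "emeasure lborel support = ennreal (2 * c)"
  using c_pos by (simp add: support_def)

lemma prob_space_U: "prob_space U"
  unfolding U_def using c_pos by (intro prob_space_uniform_measure) (auto simp: emeasure_support)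

lemma sets_U[measurable_cong]: "sets U = sets borel"
  by (simp add: U_def)

lemma emeasure_U: "A \<in> sets borel \<Longrightarrow> emeasure U A = emeasure lborel (support \<inter> A) / ennreal (2 * c)"
  unfolding U_def by (subst emeasure_uniform_measure) (auto simp: emeasure_support[symmetric] support_def)

sublocale PP: product_prob_space "\<lambda>_::nat. U" UNIV
  by (simp add: product_prob_space_def product_sigma_finite_def prob_space_U
      prob_space_imp_sigma_finite product_prob_space_axioms_def)

lemma prob_space_P: "prob_space P"
  unfolding P_def by (rule PP.prob_space_axioms)

lemma sets_P[measurable_cong]: "sets P = sets (PiM UNIV (\<lambda>_::nat. borel))"
  unfolding P_def by (rule sets_PiM_cong) (auto simp: sets_U)

lemma measurable_coordinate[measurable]: "(\<lambda>\<omega>. \<omega> i) \<in> borel_measurable P"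
  by (simp add: measurable_cong_sets[OF sets_P refl])

lemma distr_P_coordinate: "distr P borel (\<lambda>\<omega>. \<omega> i) = U"
proof -
  have "distr P borel (\<lambda>\<omega>. \<omega> i) = distr P U (\<lambda>\<omega>. \<omega> i)"
    by (rule distr_cong) (auto simp: sets_U)
  also have "\<dots> = U" unfolding P_def by (rule PP.PiM_component) simp
  finally show ?thesis .
qed

lemma indep_coordinates:
  assumes J: "finite J" "J \<noteq> {}"
  shows "prob_space.indep_vars P (\<lambda>_. borel) (\<lambda>i \<omega>. \<omega> i) J"
proof -
  interpret p: prob_space P by (rule prob_space_P)
  have "distr P (PiM J (\<lambda>_. borel)) (\<lambda>x. \<lambda>i\<in>J. x i) = distr P (PiM J (\<lambda>_. U)) (\<lambda>x. restrict x J)"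
    by (rule distr_cong) (auto intro!: sets_PiM_cong simp: sets_U)
  also have "\<dots> = PiM J (\<lambda>_. U)"
    unfolding P_def by (rule PP.distr_PiM_restrict_finite) (use J in auto)
  also have "\<dots> = PiM J (\<lambda>i. distr P borel (\<lambda>\<omega>. \<omega> i))"
    by (simp add: distr_P_coordinate)
  finally show ?thesis
    by (subst p.indep_vars_iff_distr_eq_PiM'[OF J(2)]) auto
qed

text \<open>\<open>cover x B\<close> is the indicator of the parameters \<open>\<theta>\<close> in the support of \<open>q\<^sub>0\<close> whose kernel sees all
  observations \<open>x\<^sub>i\<close>, \<open>i \<in> B\<close>; its integral \<open>overlap x B\<close> is \<open>(2c)\<^sup>|\<^sup>B\<^sup>|\<^sup>+\<^sup>1 m(x\<^sub>B)\<close>.\<close>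
definition cover :: "(nat \<Rightarrow> real) \<Rightarrow> nat set \<Rightarrow> real \<Rightarrow> real" where
  "cover x B \<theta> = (\<Prod>i\<in>B. indicator {\<theta> - c<..<\<theta> + c} (x i)) * indicator support \<theta>"

definition overlap :: "(nat \<Rightarrow> real) \<Rightarrow> nat set \<Rightarrow> real" where
  "overlap x B = (LINT \<theta>|lborel. cover x B \<theta>)"

lemma measurable_cover_PiM_UNIV:
  "(\<lambda>p. cover (fst p) B (snd p)) \<in> borel_measurable (PiM UNIV (\<lambda>_. borel) \<Otimes>\<^sub>M lborel)"
  unfolding cover_def support_def indicator_def greaterThanLessThan_iff by measurable

lemma measurable_cover_PiM:
  "(\<lambda>p. cover (fst p) B (snd p)) \<in> borel_measurable (PiM B (\<lambda>_. borel) \<Otimes>\<^sub>M lborel)"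
  unfolding cover_def support_def indicator_def greaterThanLessThan_iff by measurable

lemma measurable_cover[measurable]: "(\<lambda>p. cover (fst p) B (snd p)) \<in> borel_measurable (P \<Otimes>\<^sub>M lborel)"
  using measurable_cover_PiM_UNIV
  by (simp add: measurable_cong_sets[OF sets_pair_measure_cong[OF sets_P refl] refl])

lemma cover_nonneg: "cover x B \<theta> \<ge> 0"
  unfolding cover_def by (intro mult_nonneg_nonneg prod_nonneg) auto

lemma cover_le: "cover x B \<theta> \<le> indicator support \<theta>"
proof -
  have "(\<Prod>i\<in>B. indicator {\<theta> - c<..<\<theta> + c} (x i)) \<le> (1::real)"
    by (intro prod_le_1) auto
  then show ?thesis unfolding cover_def by (cases "\<theta> \<in> support") auto
qed

lemma integrable_cover: "integrable lborel (cover x B)"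
proof (rule Bochner_Integration.integrable_bound)
  show "integrable lborel (indicator support :: real \<Rightarrow> real)"
    using emeasure_support by (simp add: support_def)
  show "cover x B \<in> borel_measurable lborel"
    using measurable_Pair2[OF measurable_cover_PiM_UNIV, of x] by (simp add: space_PiM)
  show "AE \<theta> in lborel. norm (cover x B \<theta>) \<le> norm (indicator support \<theta> :: real)"
    using cover_le cover_nonneg by (auto simp: abs_of_nonneg)
qed

lemma nn_integral_cover: "(\<integral>\<^sup>+\<theta>. ennreal (cover x B \<theta>) \<partial>lborel) = ennreal (overlap x B)"
  unfolding overlap_def by (intro nn_integral_eq_integral integrable_cover) (simp add: cover_nonneg)

lemma overlap_nonneg: "overlap x B \<ge> 0"
  unfolding overlap_def by (intro Bochner_Integration.integral_nonneg cover_nonneg)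

lemma measurable_overlap[measurable]: "(\<lambda>x. overlap x B) \<in> borel_measurable P"
  unfolding overlap_def by (rule lborel.borel_measurable_lebesgue_integral) simp

lemma measurable_overlap_PiM: "(\<lambda>x. overlap x B) \<in> borel_measurable (PiM B (\<lambda>_. borel))"
  unfolding overlap_def
  by (rule lborel.borel_measurable_lebesgue_integral) (use measurable_cover_PiM in simp)

lemma overlap_restrict: "overlap (restrict x B) B = overlap x B"
  unfolding overlap_def cover_def by (simp cong: prod.cong)

lemma dpm_m_uniform: "dpm_m (unif_kernel c) (unif_dens \<theta>s c) x B = overlap x B / (2 * c) ^ (card B + 1)"
proof -
  have "(\<Prod>i\<in>B. unif_kernel c (x i) \<theta>) * unif_dens \<theta>s c \<theta> = cover x B \<theta> / (2 * c) ^ (card B + 1)" for \<theta>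
    unfolding unif_kernel_def unif_dens_def cover_def support_def by (simp add: prod_dividef)
  then show ?thesis unfolding dpm_m_def overlap_def by simp
qed

lemma dpm_m_uniform_nonneg: "dpm_m (unif_kernel c) (unif_dens \<theta>s c) x B \<ge> 0"
  using c_pos overlap_nonneg by (simp add: dpm_m_uniform)

lemma emeasure_U_window_le:
  assumes "\<theta> \<in> support"
  shows "emeasure U {\<theta> - c<..<\<theta> + c} \<le> ennreal (1 - \<bar>\<theta> - \<theta>s\<bar> / (2 * c))"
proof -
  have "support \<inter> {\<theta> - c<..<\<theta> + c} = {max (\<theta>s - c) (\<theta> - c)<..<min (\<theta>s + c) (\<theta> + c)}"
    by (auto simp: support_def)
  moreover have "min (\<theta>s + c) (\<theta> + c) - max (\<theta>s - c) (\<theta> - c) = 2 * c - \<bar>\<theta> - \<theta>s\<bar>"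
    by (auto simp: min_def max_def abs_if)
  ultimately have "emeasure lborel (support \<inter> {\<theta> - c<..<\<theta> + c}) = ennreal (2 * c - \<bar>\<theta> - \<theta>s\<bar>)"
    using assms by (simp add: support_def)
  moreover have "0 \<le> 2 * c - \<bar>\<theta> - \<theta>s\<bar>" using assms by (auto simp: support_def)
  ultimately have "emeasure U {\<theta> - c<..<\<theta> + c} = ennreal ((2 * c - \<bar>\<theta> - \<theta>s\<bar>) / (2 * c))"
    using c_pos by (simp add: emeasure_U divide_ennreal)
  also have "(2 * c - \<bar>\<theta> - \<theta>s\<bar>) / (2 * c) = 1 - \<bar>\<theta> - \<theta>s\<bar> / (2 * c)"
    using c_pos by (simp add: field_simps)
  finally show ?thesis by simp
qed

lemma nn_integral_cover_le:
  assumes B: "finite B" "B \<noteq> {}"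
  shows "(\<integral>\<^sup>+\<omega>. ennreal (cover \<omega> B \<theta>) \<partial>P)
         \<le> ennreal (indicator support \<theta> * (1 - \<bar>\<theta> - \<theta>s\<bar> / (2 * c)) ^ card B)"
proof (cases "\<theta> \<in> support")
  case True
  interpret p: prob_space P by (rule prob_space_P)
  define S where "S = {\<theta> - c<..<\<theta> + c}"
  have "(\<integral>\<^sup>+\<omega>. ennreal (cover \<omega> B \<theta>) \<partial>P) = (\<integral>\<^sup>+\<omega>. (\<Prod>i\<in>B. ennreal (indicator S (\<omega> i))) \<partial>P)"
    using True by (simp add: cover_def S_def prod_ennreal)
  also have "\<dots> = (\<Prod>i\<in>B. \<integral>\<^sup>+\<omega>. ennreal (indicator S (\<omega> i)) \<partial>P)"
    using p.indep_vars_compose2[OF indep_coordinates[OF B], of "\<lambda>_ x. ennreal (indicator S x)" "\<lambda>_. borel"]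
    by (intro p.indep_vars_nn_integral B) (auto simp: S_def)
  also have "\<dots> = (\<Prod>i\<in>B. emeasure U S)"
  proof (rule prod.cong[OF refl])
    fix i
    have "(\<integral>\<^sup>+\<omega>. ennreal (indicator S (\<omega> i)) \<partial>P) = (\<integral>\<^sup>+x. ennreal (indicator S x) \<partial>distr P borel (\<lambda>\<omega>. \<omega> i))"
      by (subst nn_integral_distr) (auto simp: S_def)
    then show "(\<integral>\<^sup>+\<omega>. ennreal (indicator S (\<omega> i)) \<partial>P) = emeasure U S"
      by (simp add: distr_P_coordinate S_def sets_U ennreal_indicator)
  qed
  also have "\<dots> \<le> ennreal (1 - \<bar>\<theta> - \<theta>s\<bar> / (2 * c)) ^ card B"
    using emeasure_U_window_le[OF True] by (simp add: S_def power_mono)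
  also have "\<dots> = ennreal (indicator support \<theta> * (1 - \<bar>\<theta> - \<theta>s\<bar> / (2 * c)) ^ card B)"
  proof -
    have "0 \<le> 1 - \<bar>\<theta> - \<theta>s\<bar> / (2 * c)" using True c_pos by (auto simp: support_def field_simps)
    then show ?thesis using True by (simp add: ennreal_power)
  qed
  finally show ?thesis .
qed (simp add: cover_def)

lemma nn_integral_overlap_le:
  assumes B: "finite B" "B \<noteq> {}"
  shows "(\<integral>\<^sup>+\<omega>. ennreal (overlap \<omega> B) \<partial>P) \<le> ennreal (4 * c / (card B + 1))"
proof -
  interpret p: prob_space P by (rule prob_space_P)
  interpret pp: pair_sigma_finite P lborel
    by (simp add: pair_sigma_finite_def p.sigma_finite_measure_axioms lborel.sigma_finite_measure_axioms)
  have "(\<integral>\<^sup>+\<omega>. ennreal (overlap \<omega> B) \<partial>P) = (\<integral>\<^sup>+\<theta>. (\<integral>\<^sup>+\<omega>. ennreal (cover \<omega> B \<theta>) \<partial>P) \<partial>lborel)"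
    unfolding nn_integral_cover[symmetric] by (rule pp.Fubini'[symmetric]) simp
  also have "\<dots> \<le> (\<integral>\<^sup>+\<theta>. ennreal (indicator support \<theta> * (1 - \<bar>\<theta> - \<theta>s\<bar> / (2 * c)) ^ card B) \<partial>lborel)"
    by (intro nn_integral_mono nn_integral_cover_le[OF B])
  also have "\<dots> \<le> ennreal (4 * c / (card B + 1))"
    unfolding support_def by (rule nn_integral_tent_power_le[OF c_pos])
  finally show ?thesis .
qed

text \<open>Overlaps of disjoint blocks depend on disjoint sets of observations, hence are independent.\<close>
lemma nn_integral_prod_overlap:
  assumes S: "finite S" and A: "partition_on S A"
  shows "(\<integral>\<^sup>+\<omega>. (\<Prod>B\<in>A. ennreal (overlap \<omega> B)) \<partial>P) = (\<Prod>B\<in>A. \<integral>\<^sup>+\<omega>. ennreal (overlap \<omega> B) \<partial>P)"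
proof -
  interpret p: prob_space P by (rule prob_space_P)
  show ?thesis
  proof (cases "A = {}")
    case False
    then have "S \<noteq> {}" using A by (auto simp: partition_on_def)
    moreover have "\<And>B. B \<in> A \<Longrightarrow> B \<subseteq> S" and "disjoint_family_on (\<lambda>B. B) A"
      using A by (auto simp: partition_on_def disjoint_def disjoint_family_on_def)
    ultimately have "p.indep_vars (\<lambda>B. PiM B (\<lambda>_. borel)) (\<lambda>B \<omega>. restrict (\<lambda>i. \<omega> i) B) A"
      using S by (intro p.indep_vars_restrict indep_coordinates) auto
    then have "p.indep_vars (\<lambda>_. borel) (\<lambda>B \<omega>. ennreal (overlap (restrict \<omega> B) B)) A"
      by (rule p.indep_vars_compose2) (use measurable_overlap_PiM in measurable)
    then show ?thesis
      using finite_elements[OF S A] by (intro p.indep_vars_nn_integral) (simp_all add: overlap_restrict)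
  qed (simp add: p.emeasure_space_1)
qed

lemma nn_integral_prod_cluster_le:
  assumes S: "finite S" and A: "partition_on S A"
  shows "(\<integral>\<^sup>+\<omega>. ennreal (\<Prod>B\<in>A. fact (card B - 1) * dpm_m (unif_kernel c) (unif_dens \<theta>s c) \<omega> B) \<partial>P)
         \<le> ennreal ((\<Prod>B\<in>A. block_weight (card B)) / (2 * c) ^ card S)"
proof -
  define k where "k B = fact (card B - 1) / (2 * c) ^ (card B + 1)" for B :: "nat set"
  have k: "k B \<ge> 0" for B using c_pos by (simp add: k_def)
  have blocks: "finite B" "B \<noteq> {}" if "B \<in> A" for B
    using that S A by (auto simp: partition_on_def intro: finite_subset)
  have "(\<integral>\<^sup>+\<omega>. ennreal (\<Prod>B\<in>A. fact (card B - 1) * dpm_m (unif_kernel c) (unif_dens \<theta>s c) \<omega> B) \<partial>P)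
      = (\<integral>\<^sup>+\<omega>. ennreal (prod k A) * (\<Prod>B\<in>A. ennreal (overlap \<omega> B)) \<partial>P)"
  proof (rule nn_integral_cong)
    fix \<omega>
    have "(\<Prod>B\<in>A. fact (card B - 1) * dpm_m (unif_kernel c) (unif_dens \<theta>s c) \<omega> B)
        = prod k A * (\<Prod>B\<in>A. overlap \<omega> B)"
      unfolding prod.distrib[symmetric] by (intro prod.cong refl) (simp add: dpm_m_uniform k_def)
    then show "ennreal (\<Prod>B\<in>A. fact (card B - 1) * dpm_m (unif_kernel c) (unif_dens \<theta>s c) \<omega> B)
        = ennreal (prod k A) * (\<Prod>B\<in>A. ennreal (overlap \<omega> B))"
      using k overlap_nonneg by (simp add: ennreal_mult prod_nonneg prod_ennreal)
  qed
  also have "\<dots> = ennreal (prod k A) * (\<Prod>B\<in>A. \<integral>\<^sup>+\<omega>. ennreal (overlap \<omega> B) \<partial>P)"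
    by (simp add: nn_integral_cmult nn_integral_prod_overlap[OF S A])
  also have "\<dots> \<le> ennreal (prod k A) * (\<Prod>B\<in>A. ennreal (4 * c / (card B + 1)))"
    by (intro mult_left_mono prod_mono_ennreal nn_integral_overlap_le blocks) auto
  also have "\<dots> = ennreal (prod k A * (\<Prod>B\<in>A. 4 * c / (card B + 1)))"
    using k c_pos by (simp add: prod_ennreal ennreal_mult prod_nonneg)
  also have "prod k A * (\<Prod>B\<in>A. 4 * c / (card B + 1)) = (\<Prod>B\<in>A. block_weight (card B) / (2 * c) ^ card B)"
    unfolding prod.distrib[symmetric] using c_pos
    by (intro prod.cong refl) (simp add: k_def block_weight_def divide_simps)
  also have "\<dots> = (\<Prod>B\<in>A. block_weight (card B)) / (2 * c) ^ card S"
  proof -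
    have "(\<Prod>B\<in>A. (2 * c) ^ card B) = (2 * c) ^ card S"
      by (simp only: power_sum[symmetric] sum_card_partition_on[OF S A])
    then show ?thesis by (simp only: prod_dividef)
  qed
  finally show ?thesis .
qed

definition cluster_sum :: "nat \<Rightarrow> (nat \<Rightarrow> real) \<Rightarrow> nat \<Rightarrow> real" where
  "cluster_sum n x s = (\<Sum>A\<in>set_partitions_k n s.
                          \<Prod>B\<in>A. fact (card B - 1) * dpm_m (unif_kernel c) (unif_dens \<theta>s c) x B)"

lemma dpm_W_uniform:
  "dpm_W prior (unif_kernel c) (unif_dens \<theta>s c) n x s = prior_weight prior n s * cluster_sum n x s"
  by (simp add: dpm_W_def prior_weight_def cluster_sum_def)

lemma cluster_sum_nonneg: "cluster_sum n x s \<ge> 0"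
  unfolding cluster_sum_def by (intro sum_nonneg prod_nonneg mult_nonneg_nonneg dpm_m_uniform_nonneg) auto

lemma measurable_cluster_sum[measurable]: "(\<lambda>x. cluster_sum n x s) \<in> borel_measurable P"
  unfolding cluster_sum_def dpm_m_uniform by measurable

lemma cluster_sum_one:
  assumes "n \<ge> 1"
  shows "cluster_sum n x 1 = fact (n - 1) * overlap x {..<n} / (2 * c) ^ (n + 1)"
  unfolding cluster_sum_def set_partitions_k_def partitions_into_def[symmetric]
  by (subst partitions_into_one) (use assms in \<open>auto simp: dpm_m_uniform lessThan_empty_iff\<close>)

lemma nn_integral_cluster_sum_le:
  assumes "s \<ge> 1"
  shows "(\<integral>\<^sup>+x. ennreal (cluster_sum n x s) \<partial>P) \<le> ennreal (partition_bound s n / (2 * c) ^ n)"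
proof -
  have "(\<integral>\<^sup>+x. ennreal (cluster_sum n x s) \<partial>P)
      = (\<Sum>A\<in>partitions_into {..<n} s. \<integral>\<^sup>+x. ennreal
           (\<Prod>B\<in>A. fact (card B - 1) * dpm_m (unif_kernel c) (unif_dens \<theta>s c) x B) \<partial>P)"
    unfolding cluster_sum_def set_partitions_k_def partitions_into_def[symmetric]
  proof (subst sum_ennreal[symmetric])
    show "(\<integral>\<^sup>+x. (\<Sum>A\<in>partitions_into {..<n} s. ennreal
             (\<Prod>B\<in>A. fact (card B - 1) * dpm_m (unif_kernel c) (unif_dens \<theta>s c) x B)) \<partial>P)
        = (\<Sum>A\<in>partitions_into {..<n} s. \<integral>\<^sup>+x. ennreal
             (\<Prod>B\<in>A. fact (card B - 1) * dpm_m (unif_kernel c) (unif_dens \<theta>s c) x B) \<partial>P)"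
      by (rule nn_integral_sum) (simp add: dpm_m_uniform)
  qed (auto intro!: prod_nonneg mult_nonneg_nonneg dpm_m_uniform_nonneg)
  also have "\<dots> \<le> (\<Sum>A\<in>partitions_into {..<n} s. ennreal ((\<Prod>B\<in>A. block_weight (card B)) / (2 * c) ^ n))"
    by (intro sum_mono) (use nn_integral_prod_cluster_le in \<open>fastforce simp: partitions_into_def\<close>)
  also have "\<dots> = ennreal (partition_sum block_weight s {..<n} / (2 * c) ^ n)"
    using c_pos block_weight_nonneg
    by (simp add: sum_ennreal prod_nonneg partition_sum_def sum_divide_distrib)
  also have "\<dots> \<le> ennreal (partition_bound s n / (2 * c) ^ n)"
    using partition_sum_block_weight_le[of "{..<n}" s] assms c_pos
    by (intro ennreal_leI divide_right_mono) auto
  finally show ?thesis .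
qed

lemma overlap_ge:
  assumes t: "0 < t" "t \<le> c" and x: "\<forall>i<n. \<theta>s - c < x i \<and> x i \<le> \<theta>s + c - t"
  shows "t \<le> overlap x {..<n}"
proof -
  have "indicator {\<theta>s - t<..<\<theta>s} \<theta> \<le> cover x {..<n} \<theta>" for \<theta>
  proof (cases "\<theta> \<in> {\<theta>s - t<..<\<theta>s}")
    case True
    then have "\<theta> \<in> support" "\<forall>i\<in>{..<n}. x i \<in> {\<theta> - c<..<\<theta> + c}"
      using t x by (auto simp: support_def)
    then show ?thesis by (simp add: cover_def)
  qed (simp add: cover_nonneg)
  then have "(LINT \<theta>|lborel. indicator {\<theta>s - t<..<\<theta>s} \<theta>) \<le> overlap x {..<n}"
    unfolding overlap_def using t by (intro integral_mono integrable_cover) auto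
  then show ?thesis using t by simp
qed

lemma measure_not_within_le:
  assumes t: "0 < t" "t \<le> c"
  shows "measure P {x\<in>space P. \<not> (\<forall>i<n. \<theta>s - c < x i \<and> x i \<le> \<theta>s + c - t)} \<le> real n * (t / (2 * c))"
proof -
  interpret p: prob_space P by (rule prob_space_P)
  define X where "X = - {\<theta>s - c<..\<theta>s + c - t}"
  have X: "X \<in> sets borel" by (simp add: X_def)
  have "measure P {x\<in>space P. x i \<in> X} = t / (2 * c)" for i
  proof -
    have "emeasure P {x\<in>space P. x i \<in> X} = emeasure U X"
      unfolding P_def by (rule PP.emeasure_PiM_Collect_single) (auto simp: sets_U X)
    also have "support \<inter> X = {\<theta>s + c - t<..<\<theta>s + c}" using t by (auto simp: support_def X_def)
    then have "emeasure U X = ennreal (t / (2 * c))"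
      using t c_pos by (simp add: emeasure_U[OF X] divide_ennreal)
    finally show ?thesis using t c_pos by (simp add: p.emeasure_eq_measure)
  qed
  moreover have "{x\<in>space P. \<not> (\<forall>i<n. \<theta>s - c < x i \<and> x i \<le> \<theta>s + c - t)} = (\<Union>i<n. {x\<in>space P. x i \<in> X})"
    by (auto simp: X_def)
  moreover have "measure P (\<Union>i<n. {x\<in>space P. x i \<in> X}) \<le> (\<Sum>i<n. measure P {x\<in>space P. x i \<in> X})"
    by (rule p.finite_measure_subadditive_finite) (auto simp: X_def)
  ultimately show ?thesis by simp
qed

lemma measurable_dpm_post[measurable]:
  "(\<lambda>\<omega>. dpm_post prior (unif_kernel c) (unif_dens \<theta>s c) n \<omega> s) \<in> borel_measurable P"
  unfolding dpm_post_def dpm_W_uniform by measurable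

definition multi_cluster_weight :: "(real \<Rightarrow> real) \<Rightarrow> nat \<Rightarrow> (nat \<Rightarrow> real) \<Rightarrow> real" where
  "multi_cluster_weight prior n x = (\<Sum>r=2..n. prior_weight prior n r * cluster_sum n x r)"

lemma multi_cluster_weight_nonneg:
  "(\<And>r. prior_weight prior n r \<ge> 0) \<Longrightarrow> multi_cluster_weight prior n x \<ge> 0"
  unfolding multi_cluster_weight_def by (intro sum_nonneg mult_nonneg_nonneg cluster_sum_nonneg) auto

lemma measurable_multi_cluster_weight[measurable]: "multi_cluster_weight prior n \<in> borel_measurable P"
  unfolding multi_cluster_weight_def by measurable

lemma dpm_post_one_deviation_le:
  assumes n: "n \<ge> 1" and I1: "prior_weight prior n 1 > 0"
    and Y: "multi_cluster_weight prior n x \<ge> 0"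
    and t: "0 < t" "t \<le> overlap x {..<n}"
  shows "\<bar>dpm_post prior (unif_kernel c) (unif_dens \<theta>s c) n x 1 - 1\<bar>
         \<le> multi_cluster_weight prior n x / (prior_weight prior n 1 * fact (n - 1) * t / (2 * c) ^ (n + 1))"
proof -
  define Y W L where "Y = multi_cluster_weight prior n x"
    and "W = prior_weight prior n 1 * cluster_sum n x 1"
    and "L = prior_weight prior n 1 * fact (n - 1) * t / (2 * c) ^ (n + 1)"
  have "L \<le> W"
    unfolding L_def W_def cluster_sum_one[OF n] using t I1 c_pos
    by (simp add: mult.assoc divide_right_mono mult_left_mono)
  moreover have L: "L > 0" using I1 t c_pos by (simp add: L_def)
  moreover have "{1..n} = insert 1 {2..n}" using n by auto
  then have "dpm_post prior (unif_kernel c) (unif_dens \<theta>s c) n x 1 = W / (W + Y)"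
    by (simp add: dpm_post_def dpm_W_uniform W_def Y_def multi_cluster_weight_def)
  moreover have "W / (W + Y) - 1 = - (Y / (W + Y))"
    using \<open>L \<le> W\<close> L Y by (simp add: Y_def field_simps)
  ultimately have "\<bar>dpm_post prior (unif_kernel c) (unif_dens \<theta>s c) n x 1 - 1\<bar> = Y / (W + Y)"
    using Y by (simp add: Y_def)
  also have "\<dots> \<le> Y / L"
    using \<open>L \<le> W\<close> L Y by (intro divide_left_mono) (auto simp: Y_def)
  finally show ?thesis by (simp add: Y_def L_def)
qed

lemma nn_integral_multi_cluster_weight_le:
  assumes nonneg: "\<And>r. prior_weight prior n r \<ge> 0" and I1: "prior_weight prior n 1 > 0" and n: "n \<ge> 1"
  shows "(\<integral>\<^sup>+\<omega>. ennreal (multi_cluster_weight prior n \<omega>) \<partial>P)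
         \<le> ennreal (2 * prior_weight prior n 1 * fact (n - 1) / (real n * (2 * c) ^ n)
                    * prior_weight_ratio_sum prior n)"
proof -
  have "(\<integral>\<^sup>+\<omega>. ennreal (multi_cluster_weight prior n \<omega>) \<partial>P)
      = (\<Sum>r=2..n. ennreal (prior_weight prior n r) * \<integral>\<^sup>+\<omega>. ennreal (cluster_sum n \<omega> r) \<partial>P)"
    unfolding multi_cluster_weight_def using nonneg cluster_sum_nonneg
    by (subst sum_ennreal[symmetric])
       (auto simp: ennreal_mult nn_integral_sum nn_integral_cmult intro!: mult_nonneg_nonneg)
  also have "\<dots> \<le> (\<Sum>r=2..n. ennreal (prior_weight prior n r) * ennreal (partition_bound r n / (2 * c) ^ n))"
    by (intro sum_mono mult_left_mono nn_integral_cluster_sum_le) auto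
  also have "\<dots> = (\<Sum>r=2..n. ennreal (prior_weight prior n r * (partition_bound r n / (2 * c) ^ n)))"
    by (rule sum.cong[OF refl], rule ennreal_mult[symmetric])
       (use nonneg c_pos partition_bound_nonneg in auto)
  also have "\<dots> = ennreal (\<Sum>r=2..n. prior_weight prior n r * (partition_bound r n / (2 * c) ^ n))"
    by (rule sum_ennreal) (use nonneg c_pos partition_bound_nonneg in auto)
  also have "(\<Sum>r=2..n. prior_weight prior n r * (partition_bound r n / (2 * c) ^ n))
      = 2 * prior_weight prior n 1 * fact (n - 1) / (real n * (2 * c) ^ n) * prior_weight_ratio_sum prior n"
  proof -
    have alg: "Ir * (N * F * 2 * S / (R * N^2) / x) = 2 * I1 * F / (N * x) * (Ir / I1 * S / R)"
      if "I1 > 0" "N > 0" "x > 0" "R > 0" for I1 F N x Ir S R :: real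
      using that by (simp add: divide_simps power2_eq_square)
    have "(fact n :: real) = real n * fact (n - 1)" by (rule fact_reduce) (use n in auto)
    then have "prior_weight prior n r * (partition_bound r n / (2 * c) ^ n)
        = 2 * prior_weight prior n 1 * fact (n - 1) / (real n * (2 * c) ^ n)
          * (prior_weight prior n r / prior_weight prior n 1 * 16^(r - 1) / fact r)" for r
      unfolding partition_bound_def by (rule ssubst, intro alg) (use I1 c_pos n in auto)
    then show ?thesis by (simp add: prior_weight_ratio_sum_def sum_distrib_left)
  qed
  finally show ?thesis .
qed

lemma dpm_post_one_deviation_subset:
  assumes nonneg: "\<And>r. prior_weight prior n r \<ge> 0" and I1: "prior_weight prior n 1 > 0"
    and n: "n \<ge> 1" and t: "0 < t" "t \<le> c"
  shows "{\<omega> \<in> space P. \<epsilon> < \<bar>dpm_post prior (unif_kernel c) (unif_dens \<theta>s c) n \<omega> 1 - 1\<bar>}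
         \<subseteq> {\<omega> \<in> space P. \<not> (\<forall>i<n. \<theta>s - c < \<omega> i \<and> \<omega> i \<le> \<theta>s + c - t)}
           \<union> {\<omega> \<in> space P. \<epsilon> * (prior_weight prior n 1 * fact (n - 1) * t / (2 * c) ^ (n + 1))
                              \<le> multi_cluster_weight prior n \<omega>}"
proof (intro subsetI)
  define L where "L = prior_weight prior n 1 * fact (n - 1) * t / (2 * c) ^ (n + 1)"
  have L: "L > 0" using I1 t c_pos by (simp add: L_def)
  fix \<omega> assume "\<omega> \<in> {\<omega> \<in> space P. \<epsilon> < \<bar>dpm_post prior (unif_kernel c) (unif_dens \<theta>s c) n \<omega> 1 - 1\<bar>}"
  then have \<omega>: "\<omega> \<in> space P"
    and dev: "\<epsilon> < \<bar>dpm_post prior (unif_kernel c) (unif_dens \<theta>s c) n \<omega> 1 - 1\<bar>" by auto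
  show "\<omega> \<in> {\<omega> \<in> space P. \<not> (\<forall>i<n. \<theta>s - c < \<omega> i \<and> \<omega> i \<le> \<theta>s + c - t)}
           \<union> {\<omega> \<in> space P. \<epsilon> * L \<le> multi_cluster_weight prior n \<omega>}"
  proof (cases "\<forall>i<n. \<theta>s - c < \<omega> i \<and> \<omega> i \<le> \<theta>s + c - t")
    case True
    from multi_cluster_weight_nonneg[OF nonneg]
    have "\<bar>dpm_post prior (unif_kernel c) (unif_dens \<theta>s c) n \<omega> 1 - 1\<bar> \<le> multi_cluster_weight prior n \<omega> / L"
      unfolding L_def using n I1 t overlap_ge[OF t True] by (intro dpm_post_one_deviation_le) auto
    with dev have "\<epsilon> < multi_cluster_weight prior n \<omega> / L" by linarith
    then show ?thesis using \<omega> L by (simp add: pos_less_divide_eq less_imp_le)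
  qed (use \<omega> in simp)
qed

text \<open>Observations in \<open>(\<theta>s - c, \<theta>s + c - t]\<close>, \<open>t = 2c/(nK)\<close>, give the one-cluster weight a lower bound
  (failing with probability at most \<open>1/K\<close>); Markov's inequality controls the remaining clusters.\<close>
lemma measure_dpm_post_one_deviation_le:
  assumes prior: "prior_density prior" and I1: "prior_weight prior n 1 > 0"
    and \<epsilon>: "\<epsilon> > 0" and K: "K \<ge> 1" and n: "n \<ge> 2"
  shows "measure P {\<omega> \<in> space P. \<epsilon> < \<bar>dpm_post prior (unif_kernel c) (unif_dens \<theta>s c) n \<omega> 1 - 1\<bar>}
         \<le> 1 / K + 2 * K / \<epsilon> * prior_weight_ratio_sum prior n"
proof -
  interpret prior_density prior by (fact prior)
  interpret p: prob_space P by (rule prob_space_P)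
  define t where "t = 2 * c / (real n * K)"
  define M where "M = 2 * prior_weight prior n 1 * fact (n - 1) / (real n * (2 * c) ^ n)"
  have nK: "real n * K \<ge> 2" using n K mult_mono[of 2 "real n" 1 K] by simp
  have t: "0 < t" "t \<le> c" using c_pos nK by (auto simp: t_def field_simps)
  have M: "M > 0" using I1 c_pos n by (simp add: M_def)
  have L: "prior_weight prior n 1 * fact (n - 1) * t / (2 * c) ^ (n + 1) = M / (2 * K)"
    using c_pos K by (simp add: M_def t_def field_simps)
  define bad where "bad = {\<omega>\<in>space P. \<not> (\<forall>i<n. \<theta>s - c < \<omega> i \<and> \<omega> i \<le> \<theta>s + c - t)}"
  define large where "large = {\<omega>\<in>space P. \<epsilon> * (M / (2 * K)) \<le> multi_cluster_weight prior n \<omega>}"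
  have sets: "bad \<in> sets P" "large \<in> sets P"
    unfolding bad_def large_def by measurable
  have "measure P {\<omega> \<in> space P. \<epsilon> < \<bar>dpm_post prior (unif_kernel c) (unif_dens \<theta>s c) n \<omega> 1 - 1\<bar>}
      \<le> measure P (bad \<union> large)"
    using dpm_post_one_deviation_subset[OF prior_weight_nonneg I1 _ t, of \<epsilon>] n sets
    unfolding bad_def large_def L by (intro p.finite_measure_mono) auto
  also have "\<dots> \<le> measure P bad + measure P large"
    using sets by (intro measure_subadditive) (auto simp: p.emeasure_eq_measure)
  also have "measure P bad \<le> 1 / K"
    using measure_not_within_le[OF t, of n] c_pos n by (simp add: bad_def t_def)
  also have "measure P large \<le> M * prior_weight_ratio_sum prior n / (\<epsilon> * (M / (2 * K)))"
    unfolding large_def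
  proof (rule p.Markov_inequality_nn)
    show "(\<integral>\<^sup>+\<omega>. ennreal (multi_cluster_weight prior n \<omega>) \<partial>P) \<le> ennreal (M * prior_weight_ratio_sum prior n)"
      unfolding M_def using n by (intro nn_integral_multi_cluster_weight_le prior_weight_nonneg I1) auto
    show "0 \<le> M * prior_weight_ratio_sum prior n"
      using M by (simp add: prior_weight_ratio_sum_def prior_weight_nonneg sum_nonneg)
  qed (use M K \<epsilon> multi_cluster_weight_nonneg[OF prior_weight_nonneg] in simp_all)
  also have "M * prior_weight_ratio_sum prior n / (\<epsilon> * (M / (2 * K))) = 2 * K / \<epsilon> * prior_weight_ratio_sum prior n"
    using M K \<epsilon> by (simp add: field_simps)
  finally show ?thesis by simp
qed

theorem measure_dpm_post_one_deviation_tendsto_zero: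
  assumes prior: "prior_density prior"
    and pos: "\<epsilon>0 > 0" "\<And>a. a \<in> {0<..<\<epsilon>0} \<Longrightarrow> prior a > 0"
    and D: "D \<ge> 0" and \<nu>: "\<nu> > 0" and \<rho>: "\<rho> > 32"
    and moments: "\<And>s. s \<ge> 1 \<Longrightarrow>
       (\<integral>\<^sup>+\<alpha>. ennreal (\<alpha>^s * prior \<alpha>) \<partial>lborel) \<le> ennreal (D * (1 / \<rho>^s) * Gamma (\<nu> + real s + 1))"
    and \<epsilon>: "\<epsilon> > 0"
  shows "(\<lambda>n. measure P {\<omega> \<in> space P. \<epsilon> < \<bar>dpm_post prior (unif_kernel c) (unif_dens \<theta>s c) n \<omega> 1 - 1\<bar>})
         \<longlonglongrightarrow> 0"
proof (rule tendsto_zero_if_eventually_le_inverse)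
  interpret prior_density prior by (fact prior)
  show "prior_weight_ratio_sum prior \<longlonglongrightarrow> 0"
    by (rule prior_weight_ratio_sum_tendsto_zero[OF pos D \<nu> \<rho> moments])
  fix K :: real assume K: "K \<ge> 1"
  show "\<forall>\<^sub>F n in sequentially.
          measure P {\<omega> \<in> space P. \<epsilon> < \<bar>dpm_post prior (unif_kernel c) (unif_dens \<theta>s c) n \<omega> 1 - 1\<bar>}
          \<le> 1 / K + 2 * K / \<epsilon> * prior_weight_ratio_sum prior n"
    using eventually_ge_at_top[of 2]
  proof eventually_elim
    case (elim n)
    then show ?case
      using prior_weight_one_pos[OF pos, of n] \<epsilon> K by (intro measure_dpm_post_one_deviation_le[OF prior]) auto
  qed
qed simp

end

theorem theorem2:
  fixes \<theta>s c :: real and prior :: "real \<Rightarrow> real"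
  assumes c_pos: "c > 0"
    and A1: "prior \<in> borel_measurable borel" "\<And>a. 0 \<le> prior a" "\<And>a. a \<le> 0 \<Longrightarrow> prior a = 0"
            "(\<integral>\<^sup>+ a. ennreal (prior a) \<partial>lborel) = 1"
    and A2: "\<exists>\<epsilon> \<delta> \<beta>::real. \<epsilon> > 0 \<and> \<delta> > 0 \<and>
               (\<forall>a\<in>{0<..<\<epsilon>}. (1 / \<delta>) * a powr \<beta> \<le> prior a \<and> prior a \<le> \<delta> * a powr \<beta>)"
    and A3: "\<exists>D \<nu> \<rho>::real. D > 0 \<and> \<nu> > 0 \<and> \<rho> \<ge> 38 \<and>
               (\<forall>s::nat. s \<ge> 1 \<longrightarrow>
                  (\<integral>\<^sup>+ a. ennreal (a ^ s * prior a) \<partial>lborel)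
                    < ennreal (D * (1 / \<rho> ^ s) * Gamma (\<nu> + real s + 1)))"
  defines "P \<equiv> PiM (UNIV :: nat set) (\<lambda>_. uniform_measure lborel {\<theta>s - c<..<\<theta>s + c})"
  shows "(\<forall>n \<epsilon>. {\<omega> \<in> space P.
              \<bar>dpm_post prior (unif_kernel c) (unif_dens \<theta>s c) n \<omega> 1 - 1\<bar> > \<epsilon>} \<in> sets P)
       \<and> (\<forall>\<epsilon>>0. (\<lambda>n. measure P {\<omega> \<in> space P.
              \<bar>dpm_post prior (unif_kernel c) (unif_dens \<theta>s c) n \<omega> 1 - 1\<bar> > \<epsilon>})
              \<longlonglongrightarrow> 0)"
proof -
  interpret prior: prior_density prior using A1 by unfold_locales
  interpret model: uniform_model \<theta>s c using c_pos by unfold_locales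
  have P: "P = model.P" by (simp add: P_def model.P_def model.U_def model.support_def)
  obtain \<epsilon>0 \<delta> \<beta> :: real where \<epsilon>0: "\<epsilon>0 > 0" "\<delta> > 0"
    and lower: "\<And>a. a \<in> {0<..<\<epsilon>0} \<Longrightarrow> 1 / \<delta> * a powr \<beta> \<le> prior a" using A2 by blast
  have near_zero: "prior a > 0" if "a \<in> {0<..<\<epsilon>0}" for a
  proof -
    have "0 < 1 / \<delta> * a powr \<beta>" using that \<epsilon>0 by simp
    then show ?thesis using lower[OF that] by linarith
  qed
  obtain D \<nu> \<rho> :: real where "D > 0" "\<nu> > 0" "\<rho> \<ge> 38"
    and moments: "\<And>s::nat. s \<ge> 1 \<Longrightarrow> (\<integral>\<^sup>+ a. ennreal (a ^ s * prior a) \<partial>lborel)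
                    < ennreal (D * (1 / \<rho> ^ s) * Gamma (\<nu> + real s + 1))"
    using A3 by blast
  then have "(\<lambda>n. measure model.P {\<omega> \<in> space model.P.
               \<epsilon> < \<bar>dpm_post prior (unif_kernel c) (unif_dens \<theta>s c) n \<omega> 1 - 1\<bar>}) \<longlonglongrightarrow> 0"
    if "\<epsilon> > 0" for \<epsilon>
    using that
    by (intro model.measure_dpm_post_one_deviation_tendsto_zero[OF prior.prior_density_axioms \<epsilon>0(1)
          near_zero, where D = D and \<nu> = \<nu> and \<rho> = \<rho>]) (auto intro: less_imp_le)
  moreover have "{\<omega> \<in> space model.P. \<epsilon> < \<bar>dpm_post prior (unif_kernel c) (unif_dens \<theta>s c) n \<omega> 1 - 1\<bar>}
                   \<in> sets model.P" for n \<epsilon>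
    by measurable
  ultimately show ?thesis unfolding P by blast
qed

end
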